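(* Consider the following single-relay network model. Let $q$ be a prime power, $K\ge1$, $N_{\mathrm S}\ge K$, $N_{\mathrm R}\ge1$. A source S draws $N_{\mathrm S}$ coefficient vectors i.i.d. uniformly from $\mathbb{F}_q^K$ and broadcasts one packet per vector; each packet is erased on the link S$\to$D with probability $\epsilon_{\mathrm{SD}}$ and on the link S$\to$R with probability $\epsilon_{\mathrm{SR}}$, all erasures independent and independent of the coefficients. The relay R, having received $m_1$ packets with coefficient matrix $\mathbf{C}_{\mathrm S\to\mathrm R}\in\mathbb{F}_q^{m_1\times K}$, draws $\mathbf{G}\in\mathbb{F}_q^{N_{\mathrm R}\times m_1}$ with i.i.d. uniform entries and transmits the $N_{\mathrm R}$ rows of $\mathbf{G}\mathbf{C}_{\mathrm S\to\mathrm R}$ to D, each independently erased with probability $\epsilon_{\mathrm{RD}}$. D stacks all coefficient vectors received into $\mathbf{C}_{\mathrm D}$; decoding succeeds iff $\operatorname{rank}(\mathbf{C}_{\mathrm D})=K$, and $P^{(1)}_{\mathrm R}$ denotes its probability. Then $$P^{(1)}_{\mathrm R}=\sum_{(m,m_{\mathrm D},m_{\mathrm{RD}})}\alpha(m,m_{\mathrm D},m_{\mathrm{RD}})\sum_{m'}\mathcal{B}(m',N_{\mathrm R},\epsilon_{\mathrm{RD}})\;\mathbb{P}^{(2)}\big(m'+m_{\mathrm D},\,m-m_{\mathrm{RD}}+m_{\mathrm D},\,m_{\mathrm D};K\big),$$ where $$\alpha(m,m_{\mathrm D},m_{\mathrm{RD}})=\binom{N_{\mathrm S}}{m_{\mathrm{RD}}}\binom{N_{\mathrm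 S}-m_{\mathrm{RD}}}{m-m_{\mathrm{RD}}}\binom{N_{\mathrm S}-m}{m_{\mathrm D}-m_{\mathrm{RD}}}(1-\epsilon_{\mathrm{SR}})^{m}\epsilon_{\mathrm{SR}}^{\,N_{\mathrm S}-m}(1-\epsilon_{\mathrm{SD}})^{m_{\mathrm D}}\epsilon_{\mathrm{SD}}^{\,N_{\mathrm S}-m_{\mathrm D}},$$ $\mathcal{B}(k,N,\epsilon)=\binom{N}{k}(1-\epsilon)^k\epsilon^{N-k}$, the sums range over integers with $m+m_{\mathrm D}\ge K$, $m,m_{\mathrm D}\le N_{\mathrm S}$, $\max(0,m+m_{\mathrm D}-N_{\mathrm S})\le m_{\mathrm{RD}}\le\min(m,m_{\mathrm D})$, and $\max(0,K-m_{\mathrm D})\le m'\le N_{\mathrm R}$; and $\mathbb{P}^{(2)}(m_1,m_2,m_{12};K)=\sum_{i=\max(0,K-m_1+m_{12},K-m_2+m_{12})}^{\min(m_{12},K)}\mathbb{P}_i(m_{12},K)\,\mathbb{P}(m_1-m_{12},K-i)\,\mathbb{P}(m_2-m_{12},K-i)$ with $\mathbb{P}(a,b)=\prod_{i=0}^{b-1}(1-q^{i-a})$ and $\mathbb{P}_r(a,b)=q^{-a(b-r)}\prod_{i=0}^{r-1}\frac{q^{b-i}-1}{q^{r-i}-1}\prod_{i=0}^{r-1}(1-q^{i-a})$.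
   Context: $\mathbb{P}(a,b)$ (resp. $\mathbb{P}_r(a,b)$) is the probability that an $a\times b$ matrix with i.i.d. uniform entries from $\mathbb{F}_q$ has rank $b$ (resp. $r$). In the sum, $m$ is the number of source packets received by R, $m_{\mathrm D}$ the number received by D from S, $m_{\mathrm{RD}}$ the number received by both, and $m'$ the number of recoded packets D receives from R. *)

theory Defs
  imports "HOL-Probability.Product_PMF" "Jordan_Normal_Form.DL_Rank"
begin

text \<open>Rank of a matrix over a field: dimension of its row space
  (= dimension of the column space of its transpose), K = length of the rows.\<close>
definition row_rank :: "nat \<Rightarrow> 'a::field mat \<Rightarrow> nat" where
  "row_rank K C = vec_space.rank K (transpose_mat C)"

definition sel_rows :: "nat \<Rightarrow> 'a mat \<Rightarrow> nat list \<Rightarrow> 'a vec list" where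
  "sel_rows K C js = map (row C) js"

text \<open>The random single-relay experiment; returns True iff D decodes
  (rank of C_D equals K).  Erasure indicators: True = erased.\<close>
definition relay_success ::
  "'a::{finite,field} itself \<Rightarrow> nat \<Rightarrow> nat \<Rightarrow> nat \<Rightarrow> real \<Rightarrow> real \<Rightarrow> real \<Rightarrow> bool pmf" where
  "relay_success ty K NS NR eSD eSR eRD = do {
     C \<leftarrow> pmf_of_set (carrier_mat NS K :: 'a mat set);
     erSD \<leftarrow> Pi_pmf {..<NS} False (\<lambda>_. bernoulli_pmf eSD);
     erSR \<leftarrow> Pi_pmf {..<NS} False (\<lambda>_. bernoulli_pmf eSR);
     let jsR = filter (\<lambda>j. \<not> erSR j) [0..<NS];
     let m1 = length jsR;
     let CSR = mat_of_rows K (sel_rows K C jsR);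
     G \<leftarrow> pmf_of_set (carrier_mat NR m1 :: 'a mat set);
     let CR = G * CSR;
     erRD \<leftarrow> Pi_pmf {..<NR} False (\<lambda>_. bernoulli_pmf eRD);
     let CD = mat_of_rows K (sel_rows K C (filter (\<lambda>j. \<not> erSD j) [0..<NS])
                             @ sel_rows K CR (filter (\<lambda>i. \<not> erRD i) [0..<NR]));
     return_pmf (row_rank K CD = K)
   }"

text \<open>P(a,b): probability an a x b uniform matrix over F_q has rank b.\<close>
definition Pfull :: "nat \<Rightarrow> nat \<Rightarrow> nat \<Rightarrow> real" where
  "Pfull q a b = (\<Prod>i<b. 1 - real q powi (int i - int a))"

text \<open>P_r(a,b): probability an a x b uniform matrix over F_q has rank r.\<close>
definition Prank :: "nat \<Rightarrow> nat \<Rightarrow> nat \<Rightarrow> nat \<Rightarrow> real" where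
  "Prank q r a b = real q powi (- (int a * (int b - int r)))
     * (\<Prod>i<r. (real q ^ (b - i) - 1) / (real q ^ (r - i) - 1))
     * (\<Prod>i<r. 1 - real q powi (int i - int a))"

definition P2 :: "nat \<Rightarrow> nat \<Rightarrow> nat \<Rightarrow> nat \<Rightarrow> nat \<Rightarrow> real" where
  "P2 q m1 m2 m12 K =
     (\<Sum>i \<in> {nat (max 0 (max (int K - int m1 + int m12) (int K - int m2 + int m12)))..min m12 K}.
        Prank q i m12 K * Pfull q (m1 - m12) (K - i) * Pfull q (m2 - m12) (K - i))"

definition Bin :: "nat \<Rightarrow> nat \<Rightarrow> real \<Rightarrow> real" where
  "Bin k N e = real (N choose k) * (1 - e) ^ k * e ^ (N - k)"

definition alpha :: "nat \<Rightarrow> real \<Rightarrow> real \<Rightarrow> nat \<Rightarrow> nat \<Rightarrow> nat \<Rightarrow> real" where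
  "alpha NS eSR eSD m mD mRD =
     real (NS choose mRD) * real ((NS - mRD) choose (m - mRD)) * real ((NS - m) choose (mD - mRD))
     * (1 - eSR) ^ m * eSR ^ (NS - m) * (1 - eSD) ^ mD * eSD ^ (NS - mD)"

end

theory Submission
  imports Defs
begin

text \<open>Condition on the three erasure patterns: let \<open>A\<close> be the source packets reaching D,
  \<open>B\<close> those reaching R and \<open>R\<close> the recoded packets reaching D. The rows of \<open>C\<close> are
  i.i.d. uniform in \<open>F_q^K\<close>, and D decodes iff the rows \<open>C_A\<close> together with the received
  recoded rows \<open>G_i C_B\<close> span \<open>F_q^K\<close>. Decoding needs \<open>rank C_A = i\<close> and \<open>C_{A \<union> B}\<close> of full
  rank, which has probability \<open>P_i(|A|, K) P(|B - A|, K - i)\<close>. Given that, a uniformly random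
  combination of the rows \<open>C_B\<close> falls into any subspace \<open>W \<supseteq> span C_A\<close> with probability
  \<open>|W| / q^K\<close>, exactly like a uniform vector, so the recoded rows complete \<open>span C_A\<close> with
  probability \<open>P(|R|, K - i)\<close>. Both \<open>P\<close> and \<open>P_i\<close> follow by adding one random vector at a
  time: it lies in the current span of dimension \<open>d\<close> with probability \<open>q^(d - K)\<close>.
  Averaging over the binomially distributed erasure counts gives the formula.\<close>

section \<open>The closed forms \<open>Pfull\<close> and \<open>Prank\<close>\<close>

lemma Pfull_0_right [simp]: "Pfull q a 0 = 1"
  by (simp add: Pfull_def)

lemma Pfull_eq_0: "a < b \<Longrightarrow> Pfull q a b = 0"
  unfolding Pfull_def by (rule prod_zero) (auto intro!: bexI[of _ a])

lemma Pfull_eq_prod_divide: "q > 0 \<Longrightarrow> Pfull q a b = (\<Prod>i<b. 1 - real q ^ i / real q ^ a)"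
  unfolding Pfull_def by (simp add: power_int_diff)

lemma Pfull_Suc:
  assumes q: "q > 0" and c: "c \<ge> 1"
  shows "Pfull q (Suc a) c = 1 / real q ^ c * Pfull q a c + (1 - 1 / real q ^ c) * Pfull q a (c - 1)"
proof -
  obtain c' where c': "c = Suc c'" using c by (cases c) auto
  define x where "x = real q"
  have x: "x > 0" using q by (simp add: x_def)
  have e1: "Pfull q (Suc a) c = (1 - 1 / x ^ Suc a) * Pfull q a c'"
    unfolding Pfull_eq_prod_divide[OF q] c' prod.lessThan_Suc_shift x_def[symmetric]
    using x by (simp add: field_simps)
  have e2: "Pfull q a c = Pfull q a c' * (1 - x ^ c' / x ^ a)"
    unfolding Pfull_eq_prod_divide[OF q] c' x_def by simp
  show ?thesis
    unfolding e1 e2 x_def[symmetric] using x c' by (simp add: field_simps)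
qed

text \<open>Numerator and denominator of the Gaussian binomial coefficient \<open>[K choose r]_q\<close>.\<close>

definition gauss_num :: "nat \<Rightarrow> nat \<Rightarrow> nat \<Rightarrow> real" where
  "gauss_num q K r = (\<Prod>i<r. real q ^ (K - i) - 1)"

definition gauss_den :: "nat \<Rightarrow> nat \<Rightarrow> real" where
  "gauss_den q r = (\<Prod>j<r. real q ^ Suc j - 1)"

lemma gauss_den_nonzero: "q > 1 \<Longrightarrow> gauss_den q r \<noteq> 0"
proof -
  assume "q > 1"
  then have "real q ^ Suc j > 1" for j by (intro one_less_power) simp_all
  then show ?thesis unfolding gauss_den_def by (simp add: prod_zero_iff) (metis less_irrefl)
qed

lemma Prank_eq_gauss:
  assumes q: "q > 1" and r: "r \<le> K"
  shows "Prank q r a K = Pfull q a r * gauss_num q K r / (gauss_den q r * real q ^ (a * (K - r)))"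
proof -
  have h: "int a * (int K - int r) = int (a * (K - r))" using r by (simp add: of_nat_diff)
  have e1: "real q powi (- (int a * (int K - int r))) = 1 / real q ^ (a * (K - r))"
    unfolding h power_int_minus power_int_of_nat by (simp add: divide_inverse)
  have "(\<Prod>i<r. real q ^ (r - i) - 1) = (\<Prod>i<r. real q ^ Suc (r - Suc i) - 1)"
    by (rule prod.cong) (auto simp: Suc_diff_Suc)
  also have "\<dots> = gauss_den q r" unfolding gauss_den_def by (rule prod.nat_diff_reindex)
  finally have e2: "(\<Prod>i<r. (real q ^ (K - i) - 1) / (real q ^ (r - i) - 1)) = gauss_num q K r / gauss_den q r"
    unfolding gauss_num_def by (simp add: prod_dividef)
  show ?thesis unfolding Prank_def e1 e2 Pfull_def[symmetric] by (simp add: mult_ac)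
qed

lemma Prank_0_left: "q > 1 \<Longrightarrow> r \<le> K \<Longrightarrow> Prank q r 0 K = (if r = 0 then 1 else 0)"
  by (auto simp: Prank_eq_gauss Pfull_eq_0 gauss_num_def gauss_den_def)

lemma Prank_eq_0: "a < r \<Longrightarrow> Prank q r a K = 0"
proof -
  assume "a < r"
  then have "(\<Prod>i<r. 1 - real q powi (int i - int a)) = 0"
    by (intro prod_zero) (auto intro!: bexI[of _ a])
  then show ?thesis unfolding Prank_def by simp
qed

lemma Prank_Suc_0: "q > 1 \<Longrightarrow> Prank q 0 (Suc a) K = 1 / real q ^ K * Prank q 0 a K"
  by (simp add: Prank_eq_gauss gauss_num_def gauss_den_def power_add[symmetric])

lemma Prank_Suc_Suc:
  assumes q: "q > 1" and r: "Suc r \<le> K"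
  shows "Prank q (Suc r) (Suc a) K = real q ^ Suc r / real q ^ K * Prank q (Suc r) a K
           + (1 - real q ^ r / real q ^ K) * Prank q r a K"
proof -
  define x where "x = real q"
  have x: "x > 1" using q by (simp add: x_def)
  obtain s where K: "K = Suc r + s" using r le_Suc_ex by blast
  define A where "A = x ^ a"
  define S where "S = x ^ s"
  define R where "R = x ^ r"
  define B where "B = A ^ s"
  define P where "P = Pfull q a r"
  define N where "N = gauss_num q K r"
  define D where "D = gauss_den q r"
  have pos: "A > 0" "S > 0" "R > 0" "B > 0" using x by (auto simp: A_def S_def R_def B_def)
  have D: "D \<noteq> 0" unfolding D_def using gauss_den_nonzero[OF q] .
  have xR: "x * R - 1 \<noteq> 0"
    using one_less_power[OF x, of "Suc r"] unfolding R_def by simp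
  have q0: "q > 0" using q by simp
  have p1: "Pfull q (Suc a) (Suc r) = (1 - 1 / (x * A)) * P"
    unfolding Pfull_eq_prod_divide[OF q0] prod.lessThan_Suc_shift x_def[symmetric] P_def A_def
    using x by (simp add: field_simps)
  have p2: "Pfull q a (Suc r) = P * (1 - R / A)"
    unfolding Pfull_eq_prod_divide[OF q0] P_def x_def R_def A_def by simp
  have n1: "gauss_num q K (Suc r) = N * (x * S - 1)"
    unfolding gauss_num_def N_def x_def S_def K by simp
  have d1: "gauss_den q (Suc r) = D * (x * R - 1)"
    unfolding gauss_den_def D_def x_def R_def by simp
  have w1: "x ^ (Suc a * (K - Suc r)) = B * S" unfolding K B_def A_def S_def
    by (simp add: power_mult[symmetric] power_add[symmetric] algebra_simps)
  have w2: "x ^ (a * (K - Suc r)) = B" unfolding K B_def A_def by (simp add: power_mult)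
  have w3: "x ^ (a * (K - r)) = B * A" unfolding K B_def A_def
    by (simp add: power_mult[symmetric] power_add[symmetric] algebra_simps)
  have w4: "x ^ K = x * R * S" unfolding K R_def S_def by (simp add: power_add)
  have w5: "x ^ Suc r = x * R" unfolding R_def by simp
  have r': "r \<le> K" using r by simp
  show ?thesis
    unfolding Prank_eq_gauss[OF q r] Prank_eq_gauss[OF q r'] x_def[symmetric]
      p1 p2 n1 d1 w1 w2 w3 w4 w5 P_def[symmetric] N_def[symmetric] D_def[symmetric] R_def[symmetric]
    using pos D xR x by (simp add: field_simps)
qed

text \<open>Adding a uniform row to a matrix of rank \<open>d\<close> keeps the rank with probability \<open>q^d / q^K\<close>
  and raises it by one otherwise.\<close>

lemma Prank_Suc_eq_sum:
  assumes q: "q > 1" and r: "r \<le> K"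
  shows "Prank q r (Suc a) K = (\<Sum>d\<le>K. ((if d = r then real q ^ d / real q ^ K else 0)
            + (if Suc d = r then 1 - real q ^ d / real q ^ K else 0)) * Prank q d a K)"
proof (cases r)
  case 0
  then have "(\<Sum>d\<le>K. ((if d = r then real q ^ d / real q ^ K else 0)
            + (if Suc d = r then 1 - real q ^ d / real q ^ K else 0)) * Prank q d a K)
      = 1 / real q ^ K * Prank q 0 a K"
    by (simp add: if_distrib[where f = "\<lambda>x. x * _"] sum.If_cases)
  then show ?thesis using Prank_Suc_0[OF q] 0 by simp
next
  case (Suc r')
  then have "(\<Sum>d\<le>K. ((if d = r then real q ^ d / real q ^ K else 0)
            + (if Suc d = r then 1 - real q ^ d / real q ^ K else 0)) * Prank q d a K)
      = real q ^ r / real q ^ K * Prank q r a K + (1 - real q ^ r' / real q ^ K) * Prank q r' a K"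
    using r by (simp add: distrib_right sum.distrib if_distrib[where f = "\<lambda>x. x * _"] sum.If_cases)
  then show ?thesis using Prank_Suc_Suc[OF q] r Suc by simp
qed

text \<open>The decoding probability given that D received \<open>a\<close> source packets, R received \<open>e\<close> further
  source packets and D received \<open>r\<close> recoded packets; \<open>i\<close> is the rank of the direct packets.\<close>

definition decode_prob :: "nat \<Rightarrow> nat \<Rightarrow> nat \<Rightarrow> nat \<Rightarrow> nat \<Rightarrow> real" where
  "decode_prob q K a e r = (\<Sum>i\<le>K. Prank q i a K * Pfull q e (K - i) * Pfull q r (K - i))"

lemma decode_prob_eq_0:
  assumes "e + a < K \<or> r + a < K"
  shows "decode_prob q K a e r = 0"
  unfolding decode_prob_def
proof (intro sum.neutral ballI)
  fix i assume "i \<in> {..K}"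
  show "Prank q i a K * Pfull q e (K - i) * Pfull q r (K - i) = 0"
  proof (cases "a < i")
    case False
    then have "e < K - i \<or> r < K - i" using assms by auto
    then show ?thesis by (auto simp: Pfull_eq_0)
  qed (simp add: Prank_eq_0)
qed

lemma decode_prob_eq_P2: "decode_prob q K a e r = P2 q (r + a) (e + a) a K"
proof -
  have lower_bound: "nat (max 0 (max (int K - int (r + a) + int a) (int K - int (e + a) + int a)))
      = max (K - r) (K - e)"
    by (auto simp: max_def nat_minus_as_int)
  have zero: "Prank q i a K * Pfull q e (K - i) * Pfull q r (K - i) = 0"
    if "i \<le> K" "\<not> (max (K - r) (K - e) \<le> i \<and> i \<le> min a K)" for i
  proof -
    have "a < i \<or> e < K - i \<or> r < K - i" using that by auto
    then show ?thesis by (auto simp: Prank_eq_0 Pfull_eq_0)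
  qed
  show ?thesis
    unfolding P2_def lower_bound decode_prob_def
  proof (rule sum.mono_neutral_cong_right)
    show "\<forall>i\<in>{..K} - {max (K - r) (K - e)..min a K}.
        Prank q i a K * Pfull q e (K - i) * Pfull q r (K - i) = 0"
    proof
      fix i assume "i \<in> {..K} - {max (K - r) (K - e)..min a K}"
      then show "Prank q i a K * Pfull q e (K - i) * Pfull q r (K - i) = 0" by (intro zero) auto
    qed
  qed (auto simp: mult_ac)
qed

lemma sum_Bin_decode_prob_eq_P2:
  "(\<Sum>m\<le>N. Bin m N p * decode_prob q K a e m) = (\<Sum>m\<in>{K - a..N}. Bin m N p * P2 q (m + a) (e + a) a K)"
  unfolding decode_prob_eq_P2[symmetric]
proof (rule sum.mono_neutral_right)
  show "\<forall>m\<in>{..N} - {K - a..N}. Bin m N p * decode_prob q K a e m = 0"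
  proof
    fix m assume "m \<in> {..N} - {K - a..N}"
    then have "m + a < K" by auto
    then show "Bin m N p * decode_prob q K a e m = 0" by (simp add: decode_prob_eq_0)
  qed
qed auto

section \<open>Discrete probability\<close>

lemma measure_bind_pmf:
  "measure_pmf.prob (bind_pmf M N) X = measure_pmf.expectation M (\<lambda>x. measure_pmf.prob (N x) X)"
proof -
  have "measure_pmf.prob (bind_pmf M N) X = pmf (map_pmf (\<lambda>x. x \<in> X) (bind_pmf M N)) True"
    by (simp add: pmf_map vimage_def)
  also have "\<dots> = measure_pmf.expectation M (\<lambda>x. pmf (map_pmf (\<lambda>x. x \<in> X) (N x)) True)"
    by (simp add: map_bind_pmf pmf_bind)
  also have "\<dots> = measure_pmf.expectation M (\<lambda>x. measure_pmf.prob (N x) X)"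
    by (simp add: pmf_map vimage_def)
  finally show ?thesis .
qed

lemma expectation_finite_range:
  fixes h :: "'b \<Rightarrow> real"
  assumes "finite J" "\<And>x. x \<in> set_pmf p \<Longrightarrow> Z x \<in> J"
  shows "measure_pmf.expectation p (\<lambda>x. h (Z x)) = (\<Sum>j\<in>J. h j * measure_pmf.prob p {x. Z x = j})"
proof -
  have "measure_pmf.expectation p (\<lambda>x. h (Z x)) = measure_pmf.expectation (map_pmf Z p) h"
    by simp
  also have "\<dots> = (\<Sum>j\<in>J. h j * pmf (map_pmf Z p) j)"
    by (rule integral_measure_pmf_real) (use assms in auto)
  finally show ?thesis by (simp add: pmf_map vimage_def)
qed

lemma expectation_if:
  fixes a b :: real
  shows "measure_pmf.expectation p (\<lambda>x. if P x then a else b) =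
           a * measure_pmf.prob p {x. P x} + b * (1 - measure_pmf.prob p {x. P x})"
proof -
  have "measure_pmf.expectation p (\<lambda>x. (\<lambda>t. if t then a else b) (P x)) =
          (\<Sum>j\<in>UNIV. (if j then a else b) * measure_pmf.prob p {x. P x = j})"
    by (rule expectation_finite_range) auto
  also have "\<dots> = a * measure_pmf.prob p {x. P x} + b * measure_pmf.prob p (UNIV - {x. P x})"
    by (simp add: UNIV_bool set_diff_eq)
  finally show ?thesis using measure_pmf.prob_compl[of "{x. P x}" p] by simp
qed

lemma image_fun_upd_insert: "x \<notin> A \<Longrightarrow> f(x := y) ` insert x A = insert y (f ` A)"
  by (auto simp: image_def)

lemma measure_Pi_pmf_insert:
  assumes "finite A" "x \<notin> A"
  shows "measure_pmf.prob (Pi_pmf (insert x A) dflt p) E =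
    measure_pmf.expectation (p x) (\<lambda>y. measure_pmf.prob (Pi_pmf A dflt p) {f. f(x := y) \<in> E})"
proof -
  have "Pi_pmf (insert x A) dflt p = bind_pmf (p x) (\<lambda>y. map_pmf (\<lambda>f. f(x:=y)) (Pi_pmf A dflt p))"
    by (simp add: Pi_pmf_insert'[OF assms] map_pmf_def)
  then show ?thesis by (simp add: measure_bind_pmf vimage_def)
qed

lemma measure_Pi_pmf_insert':
  assumes "finite A" "x \<notin> A"
  shows "measure_pmf.prob (Pi_pmf (insert x A) dflt p) E =
    measure_pmf.expectation (Pi_pmf A dflt p) (\<lambda>f. measure_pmf.prob (p x) {y. f(x := y) \<in> E})"
proof -
  have "Pi_pmf (insert x A) dflt p = bind_pmf (Pi_pmf A dflt p) (\<lambda>f. map_pmf (\<lambda>y. f(x:=y)) (p x))"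
    by (simp add: Pi_pmf_insert'[OF assms] map_pmf_def bind_commute_pmf[of "p x"])
  then show ?thesis by (simp add: measure_bind_pmf vimage_def)
qed

lemma measure_Pi_pmf_subset:
  assumes "finite I" "J \<subseteq> I" "\<And>Y. P (\<lambda>x. if x \<in> J then Y x else d) = P Y"
  shows "measure_pmf.prob (Pi_pmf J d p) {Y. P Y} = measure_pmf.prob (Pi_pmf I d p) {Y. P Y}"
  unfolding Pi_pmf_subset[OF assms(1,2)] using assms(3) by (simp add: vimage_def)

lemma measure_Pi_pmf_union:
  assumes "finite A" "finite E" "A \<inter> E = {}"
  shows "measure_pmf.prob (Pi_pmf (A \<union> E) d p) {X. P (X ` A) (X ` E)}
    = measure_pmf.expectation (Pi_pmf A d p) (\<lambda>f. measure_pmf.prob (Pi_pmf E d p) {g. P (f ` A) (g ` E)})"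
proof -
  let ?join = "\<lambda>(f, g) x. if x \<in> A then f x else g x"
  have img: "?join (f, g) ` A = f ` A" "?join (f, g) ` E = g ` E" for f g
    using assms(3) by (auto simp: image_def)
  have "?join -` {X. P (X ` A) (X ` E)} = {(f, g). P (f ` A) (g ` E)}"
  proof (intro Set.set_eqI)
    fix fg :: "('a \<Rightarrow> 'b) \<times> ('a \<Rightarrow> 'b)"
    show "fg \<in> ?join -` {X. P (X ` A) (X ` E)} \<longleftrightarrow> fg \<in> {(f, g). P (f ` A) (g ` E)}"
      using img[of "fst fg" "snd fg"] by (simp add: case_prod_beta)
  qed
  then have "measure_pmf.prob (Pi_pmf (A \<union> E) d p) {X. P (X ` A) (X ` E)}
      = measure_pmf.prob (pair_pmf (Pi_pmf A d p) (Pi_pmf E d p)) {(f, g). P (f ` A) (g ` E)}"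
    unfolding Pi_pmf_union[OF assms] measure_map_pmf by simp
  also have "pair_pmf (Pi_pmf A d p) (Pi_pmf E d p) = bind_pmf (Pi_pmf A d p) (\<lambda>f. map_pmf (Pair f) (Pi_pmf E d p))"
    by (simp add: pair_pmf_def map_pmf_def)
  also have "measure_pmf.prob \<dots> {(f, g). P (f ` A) (g ` E)}
      = measure_pmf.expectation (Pi_pmf A d p) (\<lambda>f. measure_pmf.prob (Pi_pmf E d p) {g. P (f ` A) (g ` E)})"
    unfolding measure_bind_pmf by (simp add: vimage_def)
  finally show ?thesis .
qed

lemma expectation_Pi_pmf_subset:
  fixes k :: "_ \<Rightarrow> real"
  assumes "finite I" "J \<subseteq> I" "\<And>Y. k (\<lambda>x. if x \<in> J then Y x else d) = k Y"
  shows "measure_pmf.expectation (Pi_pmf J d p) k = measure_pmf.expectation (Pi_pmf I d p) k"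
  unfolding Pi_pmf_subset[OF assms(1,2)] using assms(3) by simp

lemma set_Pi_pmf_uniform_subset:
  assumes "finite I" "finite B" "B \<noteq> {}" "X \<in> set_pmf (Pi_pmf I dflt (\<lambda>_. pmf_of_set B))"
  shows "X ` I \<subseteq> B"
  using set_Pi_pmf_subset'[OF assms(1), of dflt "\<lambda>_. pmf_of_set B"] assms(2-4)
  by (auto simp: PiE_dflt_def)

definition received :: "nat \<Rightarrow> (nat \<Rightarrow> bool) \<Rightarrow> nat set" where
  "received N erased = {j. j < N \<and> \<not> erased j}"

lemma received_subset: "received N erased \<subseteq> {..<N}"
  by (auto simp: received_def)

lemma map_pmf_Not_bernoulli:
  assumes "0 \<le> e" "e \<le> 1"
  shows "map_pmf Not (bernoulli_pmf e) = bernoulli_pmf (1 - e)"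
proof (rule pmf_eqI)
  fix b :: bool
  have "Not -` {b} = {\<not> b}" by auto
  then have "pmf (map_pmf Not (bernoulli_pmf e)) b = pmf (bernoulli_pmf e) (\<not> b)"
    by (simp add: pmf_map measure_pmf_single)
  then show "pmf (map_pmf Not (bernoulli_pmf e)) b = pmf (bernoulli_pmf (1 - e)) b"
    using assms by (cases b) auto
qed

lemma prob_card_unerased:
  assumes S: "finite S" and e: "0 \<le> e" "e \<le> 1"
  shows "measure_pmf.prob (Pi_pmf S d (\<lambda>_. bernoulli_pmf e)) {f. card {x\<in>S. \<not> f x} = k}
    = Bin k (card S) e"
proof -
  let ?P = "Pi_pmf S d (\<lambda>_. bernoulli_pmf e)"
  have "map_pmf ((\<circ>) Not) ?P = Pi_pmf S (\<not> d) (\<lambda>_. map_pmf Not (bernoulli_pmf e))"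
    by (rule Pi_pmf_map[symmetric]) (use S in auto)
  also have "\<dots> = Pi_pmf S (\<not> d) (\<lambda>_. bernoulli_pmf (1 - e))"
    using map_pmf_Not_bernoulli[OF e] by simp
  finally have neg: "map_pmf ((\<circ>) Not) ?P = Pi_pmf S (\<not> d) (\<lambda>_. bernoulli_pmf (1 - e))" .
  have "measure_pmf.prob ?P {f. card {x\<in>S. \<not> f x} = k}
      = pmf (map_pmf (\<lambda>g. card {x\<in>S. g x}) (map_pmf ((\<circ>) Not) ?P)) k"
    by (simp add: pmf_map vimage_def map_pmf_comp)
  also have "map_pmf (\<lambda>g. card {x\<in>S. g x}) (map_pmf ((\<circ>) Not) ?P) = binomial_pmf (card S) (1 - e)"
    unfolding neg by (rule binomial_pmf_altdef'[symmetric]) (use S e in auto)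
  finally show ?thesis using e by (simp add: Bin_def)
qed

lemma prob_card_unerased_Int:
  assumes U: "finite U" and BU: "B \<subseteq> U" and e: "0 \<le> e" "e \<le> 1" and r: "r \<le> k"
  shows "measure_pmf.prob (Pi_pmf U d (\<lambda>_. bernoulli_pmf e))
           {f. card {x\<in>U. \<not> f x} = k \<and> card ({x\<in>U. \<not> f x} \<inter> B) = r}
         = Bin r (card B) e * Bin (k - r) (card U - card B) e"
proof -
  let ?M = "Pi_pmf B d (\<lambda>_. bernoulli_pmf e)"
  let ?N = "Pi_pmf (U - B) d (\<lambda>_. bernoulli_pmf e)"
  define mg where "mg = (\<lambda>(f :: 'a \<Rightarrow> bool, g :: 'a \<Rightarrow> bool) x. if x \<in> B then f x else g x)"
  have fB: "finite B" "finite (U - B)" using U BU finite_subset by auto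
  have UB: "U = B \<union> (U - B)" using BU by auto
  have PU: "Pi_pmf U d (\<lambda>_. bernoulli_pmf e) = map_pmf mg (pair_pmf ?M ?N)"
    unfolding mg_def by (subst UB, rule Pi_pmf_union) (use fB in auto)
  have pre: "mg -` {f. card {x\<in>U. \<not> f x} = k \<and> card ({x\<in>U. \<not> f x} \<inter> B) = r}
      = {(f, g). card {x\<in>B. \<not> f x} = r \<and> card {x\<in>U - B. \<not> g x} = k - r}"
  proof (rule Set.set_eqI)
    fix x :: "('a \<Rightarrow> bool) \<times> ('a \<Rightarrow> bool)"
    obtain f g where x: "x = (f, g)" by (cases x)
    have s1: "{x\<in>U. \<not> mg (f, g) x} \<inter> B = {x\<in>B. \<not> f x}" using BU by (auto simp: mg_def)
    have s2: "{x\<in>U. \<not> mg (f, g) x} = {x\<in>B. \<not> f x} \<union> {x\<in>U - B. \<not> g x}"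
      using BU by (auto simp: mg_def)
    have c: "card {x\<in>U. \<not> mg (f, g) x} = card {x\<in>B. \<not> f x} + card {x\<in>U - B. \<not> g x}"
      unfolding s2 by (rule card_Un_disjoint) (use fB in auto)
    show "x \<in> mg -` {f. card {x\<in>U. \<not> f x} = k \<and> card ({x\<in>U. \<not> f x} \<inter> B) = r}
      \<longleftrightarrow> x \<in> {(f, g). card {x\<in>B. \<not> f x} = r \<and> card {x\<in>U - B. \<not> g x} = k - r}"
      unfolding x vimage_eq mem_Collect_eq prod.case s1 c using r by auto
  qed
  have "measure_pmf.prob (Pi_pmf U d (\<lambda>_. bernoulli_pmf e))
           {f. card {x\<in>U. \<not> f x} = k \<and> card ({x\<in>U. \<not> f x} \<inter> B) = r}
      = measure_pmf.prob (pair_pmf ?M ?N) {(f, g). card {x\<in>B. \<not> f x} = r \<and> card {x\<in>U - B. \<not> g x} = k - r}"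
    unfolding PU measure_map_pmf pre ..
  also have "pair_pmf ?M ?N = bind_pmf ?M (\<lambda>f. map_pmf (Pair f) ?N)"
    by (simp add: pair_pmf_def map_pmf_def)
  also have "measure_pmf.prob (bind_pmf ?M (\<lambda>f. map_pmf (Pair f) ?N)) {(f, g). card {x\<in>B. \<not> f x} = r \<and> card {x\<in>U - B. \<not> g x} = k - r}
      = measure_pmf.expectation ?M (\<lambda>f. if card {x\<in>B. \<not> f x} = r then measure_pmf.prob ?N {g. card {x\<in>U - B. \<not> g x} = k - r} else 0)"
    unfolding measure_bind_pmf by (rule arg_cong[where f = "measure_pmf.expectation ?M"]) (auto simp: vimage_def)
  also have "\<dots> = measure_pmf.prob ?N {g. card {x\<in>U - B. \<not> g x} = k - r} * measure_pmf.prob ?M {f. card {x\<in>B. \<not> f x} = r}"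
    unfolding expectation_if by simp
  also have "\<dots> = Bin r (card B) e * Bin (k - r) (card U - card B) e"
    using prob_card_unerased[OF fB(1) e] prob_card_unerased[OF fB(2) e] card_Diff_subset[OF fB(1) BU] by simp
  finally show ?thesis .
qed

lemma expectation_card_received:
  fixes h :: "nat \<Rightarrow> real"
  assumes e: "0 \<le> e" "e \<le> 1"
  shows "measure_pmf.expectation (Pi_pmf {..<N} False (\<lambda>_. bernoulli_pmf e)) (\<lambda>f. h (card (received N f)))
       = (\<Sum>k\<le>N. Bin k N e * h k)"
proof -
  have eq: "received N f = {x\<in>{..<N}. \<not> f x}" for f by (auto simp: received_def)
  have "card (received N f) \<in> {..N}" for f
    using card_mono[of "{..<N}" "received N f"] by (auto simp: received_def)
  then have "measure_pmf.expectation (Pi_pmf {..<N} False (\<lambda>_. bernoulli_pmf e)) (\<lambda>f. h (card (received N f)))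
      = (\<Sum>k\<le>N. h k * measure_pmf.prob (Pi_pmf {..<N} False (\<lambda>_. bernoulli_pmf e)) {f. card (received N f) = k})"
    by (intro expectation_finite_range) auto
  then show ?thesis unfolding eq using prob_card_unerased[OF finite_lessThan e] by (simp add: mult.commute)
qed

lemma card_received_Int_mem:
  assumes B: "B \<subseteq> {..<N}"
  shows "(card (received N f), card (received N f \<inter> B))
           \<in> {(k, r). r \<le> k \<and> k \<le> N \<and> r \<le> card B \<and> k - r \<le> N - card B}"
proof -
  let ?A = "received N f"
  have A: "?A \<subseteq> {..<N}" by (rule received_subset)
  have finA: "finite ?A" and finB: "finite B" using A B finite_subset by auto
  have "card ?A - card (?A \<inter> B) = card (?A - B)" by (simp add: card_Diff_subset_Int finA)
  also have "\<dots> \<le> card ({..<N} - B)" using A by (intro card_mono) auto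
  also have "\<dots> = N - card B" using B finB by (simp add: card_Diff_subset)
  finally have "card ?A - card (?A \<inter> B) \<le> N - card B" .
  moreover have "card (?A \<inter> B) \<le> card ?A" using finA by (intro card_mono) auto
  moreover have "card (?A \<inter> B) \<le> card B" using finB by (intro card_mono) auto
  moreover have "card ?A \<le> N" using card_mono[OF finite_lessThan A] by simp
  ultimately show ?thesis by simp
qed

lemma expectation_card_received_Int:
  fixes g :: "nat \<Rightarrow> nat \<Rightarrow> real"
  assumes e: "0 \<le> e" "e \<le> 1" and B: "B \<subseteq> {..<N}"
  shows "measure_pmf.expectation (Pi_pmf {..<N} False (\<lambda>_. bernoulli_pmf e))
          (\<lambda>f. g (card (received N f)) (card (received N f \<inter> B)))
       = (\<Sum>(k, r)\<in>{(k, r). r \<le> k \<and> k \<le> N \<and> r \<le> card B \<and> k - r \<le> N - card B}.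
            g k r * (Bin r (card B) e * Bin (k - r) (N - card B) e))"
proof -
  let ?J = "{(k, r). r \<le> k \<and> k \<le> N \<and> r \<le> card B \<and> k - r \<le> N - card B}"
  let ?P = "Pi_pmf {..<N} False (\<lambda>_. bernoulli_pmf e)"
  have eq: "received N f = {x\<in>{..<N}. \<not> f x}" for f by (auto simp: received_def)
  have finJ: "finite ?J" by (rule finite_subset[of _ "{..N} \<times> {..N}"]) auto
  have "measure_pmf.expectation ?P (\<lambda>f. case_prod g (card (received N f), card (received N f \<inter> B)))
      = (\<Sum>t\<in>?J. case_prod g t * measure_pmf.prob ?P {f. (card (received N f), card (received N f \<inter> B)) = t})"
    by (rule expectation_finite_range[OF finJ]) (rule card_received_Int_mem[OF B])
  also have "\<dots> = (\<Sum>(k, r)\<in>?J. g k r * (Bin r (card B) e * Bin (k - r) (N - card B) e))"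
  proof (rule sum.cong[OF refl])
    fix t assume t: "t \<in> ?J"
    obtain k r where kr: "t = (k, r)" by (cases t)
    then have "r \<le> k" using t by simp
    then show "case_prod g t * measure_pmf.prob ?P {f. (card (received N f), card (received N f \<inter> B)) = t}
        = (\<lambda>(k, r). g k r * (Bin r (card B) e * Bin (k - r) (N - card B) e)) t"
      using prob_card_unerased_Int[OF finite_lessThan B e, of r k False] by (simp add: eq kr)
  qed
  finally show ?thesis by simp
qed

lemma expectation_received_counts:
  fixes h :: "nat \<Rightarrow> nat \<Rightarrow> nat \<Rightarrow> real"
  assumes pD: "0 \<le> pD" "pD \<le> 1" and pR: "0 \<le> pR" "pR \<le> 1" and B: "B \<subseteq> {..<N}"
  shows "measure_pmf.expectation (Pi_pmf {..<N} False (\<lambda>_. bernoulli_pmf pD)) (\<lambda>erD.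
           measure_pmf.expectation (Pi_pmf {..<M} False (\<lambda>_. bernoulli_pmf pR)) (\<lambda>erR.
             h (card (received N erD)) (card (B - received N erD)) (card (received M erR))))
    = (\<Sum>(k, r)\<in>{(k, r). r \<le> k \<and> k \<le> N \<and> r \<le> card B \<and> k - r \<le> N - card B}.
         (\<Sum>m\<le>M. Bin m M pR * h k (card B - r) m) * (Bin r (card B) pD * Bin (k - r) (N - card B) pD))"
proof -
  have inner: "measure_pmf.expectation (Pi_pmf {..<M} False (\<lambda>_. bernoulli_pmf pR))
      (\<lambda>erR. h k e (card (received M erR))) = (\<Sum>m\<le>M. Bin m M pR * h k e m)" for k e
    by (rule expectation_card_received[OF pR])
  have diff: "card (B - received N erD) = card B - card (received N erD \<inter> B)" for erD
    using B by (simp add: card_Diff_subset_Int finite_subset Int_commute)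
  show ?thesis unfolding inner diff
    by (rule expectation_card_received_Int[OF pD B, where g = "\<lambda>k r. \<Sum>m\<le>M. Bin m M pR * h k (card B - r) m"])
qed

definition uniform_coeffs :: "nat \<Rightarrow> (nat \<Rightarrow> 'b::{finite,zero}) pmf" where
  "uniform_coeffs m = Pi_pmf {..<m} 0 (\<lambda>_. pmf_of_set UNIV)"

lemma uniform_coeffs_eq_pmf_of_set: "uniform_coeffs m = pmf_of_set (PiE_dflt {..<m} 0 (\<lambda>_. UNIV))"
  unfolding uniform_coeffs_def by (rule Pi_pmf_of_set) auto

lemma map_uniform_coeffs_translate:
  "map_pmf (\<lambda>c t. if t < m then c t + h t else 0) (uniform_coeffs m)
     = (uniform_coeffs m :: (nat \<Rightarrow> 'b::{finite,ab_group_add}) pmf)"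
proof -
  let ?P = "PiE_dflt {..<m} 0 (\<lambda>_. UNIV) :: (nat \<Rightarrow> 'b) set"
  have "bij_betw (\<lambda>c t. if t < m then c t + h t else 0) ?P ?P"
    by (rule bij_betwI[where g = "\<lambda>c t. if t < m then c t - h t else 0"])
      (auto simp: PiE_dflt_def fun_eq_iff)
  moreover have "finite ?P" by (rule finite_PiE_dflt) auto
  ultimately show ?thesis unfolding uniform_coeffs_eq_pmf_of_set
    by (intro map_pmf_of_set_bij_betw) auto
qed

lemma finite_carrier_mat: "finite (carrier_mat nr nc :: 'a::finite mat set)"
proof -
  have "carrier_mat nr nc \<subseteq> (\<lambda>f. mat nr nc f) ` (({..<nr} \<times> {..<nc}) \<rightarrow>\<^sub>E (UNIV :: 'a set))"
  proof
    fix A :: "'a mat" assume A: "A \<in> carrier_mat nr nc"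
    have "A = mat nr nc (restrict (\<lambda>ij. A $$ ij) ({..<nr} \<times> {..<nc}))"
      using A by (intro eq_matI) auto
    moreover have "restrict (\<lambda>ij. A $$ ij) ({..<nr} \<times> {..<nc}) \<in> ({..<nr} \<times> {..<nc}) \<rightarrow>\<^sub>E (UNIV :: 'a set)"
      by (simp only: restrict_PiE_iff) simp
    ultimately show "A \<in> (\<lambda>f. mat nr nc f) ` (({..<nr} \<times> {..<nc}) \<rightarrow>\<^sub>E (UNIV :: 'a set))"
      by (rule image_eqI)
  qed
  then show ?thesis by (rule finite_subset) (auto intro!: finite_imageI finite_PiE)
qed

lemma card_carrier_vec: "card (carrier_vec n :: 'a::finite vec set) = CARD('a) ^ n"
proof -
  have "bij_betw (\<lambda>v. restrict (\<lambda>i. v $ i) {..<n}) (carrier_vec n) ({..<n} \<rightarrow>\<^sub>E (UNIV :: 'a set))"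
    by (rule bij_betwI[where g = "\<lambda>f. vec n f"]) (auto intro!: eq_vecI simp: fun_eq_iff PiE_def extensional_def)
  then show ?thesis by (simp add: bij_betw_same_card card_PiE)
qed

lemma finite_carrier_vec [simp]: "finite (carrier_vec n :: 'a::finite vec set)"
  by (rule card_ge_0_finite) (simp add: card_carrier_vec)

lemma carrier_vec_nonempty: "carrier_vec n \<noteq> ({} :: 'a::zero vec set)"
  using zero_carrier_vec by blast

lemma carrier_mat_nonempty: "carrier_mat nr nc \<noteq> ({} :: 'a::zero mat set)"
  using zero_carrier_mat by blast

lemma map_rows_uniform_mat:
  fixes dflt :: "'a::{finite,zero} vec"
  shows "map_pmf (\<lambda>C j. if j < nr then row C j else dflt) (pmf_of_set (carrier_mat nr nc :: 'a mat set))
         = Pi_pmf {..<nr} dflt (\<lambda>_. pmf_of_set (carrier_vec nc))"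
proof -
  let ?P = "PiE_dflt {..<nr} dflt (\<lambda>_. carrier_vec nc :: 'a vec set)"
  define rows_fun where "rows_fun = (\<lambda>(C :: 'a mat) j. if j < nr then row C j else dflt)"
  have "bij_betw rows_fun (carrier_mat nr nc) ?P"
  proof (rule bij_betwI[where g = "\<lambda>f. mat nr nc (\<lambda>(i, j). f i $ j)"])
    show "rows_fun \<in> carrier_mat nr nc \<rightarrow> ?P" by (auto simp: PiE_dflt_def rows_fun_def)
    show "(\<lambda>f. mat nr nc (\<lambda>(i, j). f i $ j)) \<in> ?P \<rightarrow> carrier_mat nr nc" by auto
    show "mat nr nc (\<lambda>(i, j). rows_fun C i $ j) = C" if "C \<in> carrier_mat nr nc" for C
      using that unfolding rows_fun_def by (intro eq_matI) auto
    show "rows_fun (mat nr nc (\<lambda>(i, j). f i $ j)) = f" if f: "f \<in> ?P" for f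
    proof
      fix j
      show "rows_fun (mat nr nc (\<lambda>(i, j). f i $ j)) j = f j"
        using f unfolding rows_fun_def by (cases "j < nr") (auto simp: PiE_dflt_def intro!: eq_vecI)
    qed
  qed
  moreover have "Pi_pmf {..<nr} dflt (\<lambda>_. pmf_of_set (carrier_vec nc)) = pmf_of_set ?P"
    by (rule Pi_pmf_of_set) (auto simp: carrier_vec_nonempty)
  ultimately show ?thesis unfolding rows_fun_def[symmetric]
    by (metis map_pmf_of_set_bij_betw finite_carrier_mat carrier_mat_nonempty)
qed

lemma map_coeffs_uniform_mat:
  fixes dflt :: "nat \<Rightarrow> 'a::{finite,zero}"
  shows "map_pmf (\<lambda>G i. if i < nr then (\<lambda>t. if t < nc then G $$ (i, t) else 0) else dflt)
           (pmf_of_set (carrier_mat nr nc :: 'a mat set))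
         = Pi_pmf {..<nr} dflt (\<lambda>_. uniform_coeffs nc)"
proof -
  let ?P = "PiE_dflt {..<nr} dflt (\<lambda>_. PiE_dflt {..<nc} 0 (\<lambda>_. UNIV)) :: (nat \<Rightarrow> nat \<Rightarrow> 'a) set"
  define coeffs where
    "coeffs = (\<lambda>(G :: 'a mat) i. if i < nr then (\<lambda>t. if t < nc then G $$ (i, t) else 0) else dflt)"
  have "bij_betw coeffs (carrier_mat nr nc) ?P"
  proof (rule bij_betwI[where g = "\<lambda>f. mat nr nc (\<lambda>(i, j). f i j)"])
    show "coeffs \<in> carrier_mat nr nc \<rightarrow> ?P" by (auto simp: PiE_dflt_def coeffs_def)
    show "(\<lambda>f. mat nr nc (\<lambda>(i, j). f i j)) \<in> ?P \<rightarrow> carrier_mat nr nc" by auto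
    show "mat nr nc (\<lambda>(i, j). coeffs G i j) = G" if "G \<in> carrier_mat nr nc" for G
      using that unfolding coeffs_def by (intro eq_matI) auto
    show "coeffs (mat nr nc (\<lambda>(i, j). f i j)) = f" if "f \<in> ?P" for f
      using that unfolding coeffs_def by (auto simp: PiE_dflt_def fun_eq_iff)
  qed
  moreover have "Pi_pmf {..<nr} dflt (\<lambda>_. uniform_coeffs nc) = pmf_of_set ?P"
    unfolding uniform_coeffs_eq_pmf_of_set by (rule Pi_pmf_of_set) (auto intro: finite_PiE_dflt)
  ultimately show ?thesis unfolding coeffs_def[symmetric]
    by (metis map_pmf_of_set_bij_betw finite_carrier_mat carrier_mat_nonempty)
qed

section \<open>Spans of random vectors over a finite field\<close>

lemma two_le_CARD_field: "CARD('a::{finite,field}) \<ge> 2"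
proof -
  have "card {0::'a, 1} \<le> CARD('a)" by (rule card_mono) auto
  then show ?thesis by simp
qed

locale fin_vec_space = vec_space f_ty n for f_ty :: "'a::{finite,field} itself" and n
begin

text \<open>\<open>lincomb_list\<close> in componentwise form, which the coordinate computations below use.\<close>

definition lincomb_nth :: "(nat \<Rightarrow> 'a) \<Rightarrow> 'a vec list \<Rightarrow> 'a vec" where
  "lincomb_nth c L = vec n (\<lambda>j. \<Sum>t<length L. c t * L!t $ j)"

lemma lincomb_nth_carrier [simp]: "lincomb_nth c L \<in> carrier_vec n"
  by (simp add: lincomb_nth_def)

lemma dim_lincomb_nth [simp]: "dim_vec (lincomb_nth c L) = n"
  by (simp add: lincomb_nth_def)

lemma index_lincomb_nth [simp]: "j < n \<Longrightarrow> lincomb_nth c L $ j = (\<Sum>t<length L. c t * L!t $ j)"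
  by (simp add: lincomb_nth_def)

lemma lincomb_nth_cong: "(\<And>t. t < length L \<Longrightarrow> c t = d t) \<Longrightarrow> lincomb_nth c L = lincomb_nth d L"
  unfolding lincomb_nth_def by (auto intro!: sum.cong)

lemma lincomb_nth_eq_lincomb_list:
  assumes "set L \<subseteq> carrier_vec n"
  shows "lincomb_nth c L = lincomb_list c L"
proof -
  have "\<forall>w\<in>set L. dim_vec w = n" using assms by auto
  note * = lincomb_list_as_mat_mult[OF this, of c]
  show ?thesis unfolding *
    by (rule eq_vecI) (use assms in \<open>auto simp: mult_mat_vec_def scalar_prod_def lincomb_nth_def
        mat_of_cols_def row_def intro!: sum.cong simp flip: lessThan_atLeast0\<close>)
qed

lemma span_eq_range_lincomb_nth:
  assumes "set L \<subseteq> carrier_vec n"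
  shows "span (set L) = range (\<lambda>c. lincomb_nth c L)"
  unfolding span_list_as_span[OF assms, symmetric] span_list_def lincomb_nth_eq_lincomb_list[OF assms]
  by auto

lemma lincomb_nth_in_span: "set L \<subseteq> carrier_vec n \<Longrightarrow> lincomb_nth c L \<in> span (set L)"
  by (simp add: span_eq_range_lincomb_nth)

lemma lincomb_nth_append: "lincomb_nth c (L1 @ L2) = lincomb_nth c L1 + lincomb_nth (\<lambda>t. c (t + length L1)) L2"
proof (rule eq_vecI)
  fix j assume j: "j < dim_vec (lincomb_nth c L1 + lincomb_nth (\<lambda>t. c (t + length L1)) L2)"
  have "(\<Sum>t<length (L1 @ L2). c t * (L1 @ L2) ! t $ j)
      = (\<Sum>t\<in>{0..<length L1}. c t * (L1 @ L2) ! t $ j) + (\<Sum>t\<in>{length L1..<length L1 + length L2}. c t * (L1 @ L2) ! t $ j)"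
    by (simp add: lessThan_atLeast0 atLeastLessThan_add_Un[of 0] sum.union_disjoint)
  also have "(\<Sum>t\<in>{0..<length L1}. c t * (L1 @ L2) ! t $ j) = (\<Sum>t<length L1. c t * L1 ! t $ j)"
    by (simp add: lessThan_atLeast0 nth_append)
  also have "(\<Sum>t\<in>{length L1..<length L1 + length L2}. c t * (L1 @ L2) ! t $ j)
      = (\<Sum>t\<in>{0 + length L1..<length L2 + length L1}. c t * (L1 @ L2) ! t $ j)" by (simp add: add.commute)
  also have "\<dots> = (\<Sum>t<length L2. c (t + length L1) * L2 ! t $ j)"
    unfolding sum.shift_bounds_nat_ivl by (simp add: lessThan_atLeast0 nth_append)
  finally show "lincomb_nth c (L1 @ L2) $ j = (lincomb_nth c L1 + lincomb_nth (\<lambda>t. c (t + length L1)) L2) $ j"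
    using j by simp
qed simp

lemma lincomb_nth_Cons:
  assumes "v \<in> carrier_vec n"
  shows "lincomb_nth c (v # L) = c 0 \<cdot>\<^sub>v v + lincomb_nth (c \<circ> Suc) L"
  by (rule eq_vecI) (use assms in \<open>auto simp: sum.lessThan_Suc_shift simp del: sum.lessThan_Suc\<close>)

lemma lincomb_nth_snoc:
  assumes "v \<in> carrier_vec n"
  shows "lincomb_nth c (L @ [v]) = lincomb_nth c L + c (length L) \<cdot>\<^sub>v v"
  by (rule eq_vecI) (use assms in \<open>auto simp: lincomb_nth_append\<close>)

lemma obtain_list_span:
  assumes "finite S" "S \<subseteq> carrier_vec n"
  obtains L where "set L = S" "span S = range (\<lambda>c. lincomb_nth c L)"
  by (metis assms finite_list span_eq_range_lincomb_nth)

lemma span_subset_carrier: "S \<subseteq> carrier_vec n \<Longrightarrow> span S \<subseteq> carrier_vec n"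
  by (rule subsetI, erule span_closed[rotated])

lemma zero_in_span_vec: "finite S \<Longrightarrow> S \<subseteq> carrier_vec n \<Longrightarrow> 0\<^sub>v n \<in> span S"
  by (erule obtain_list_span, assumption) (auto intro!: image_eqI[of _ _ "\<lambda>_. 0"] eq_vecI)

lemma in_span_Un_list_iff:
  assumes S: "finite S" "S \<subseteq> carrier_vec n" and L: "set L \<subseteq> carrier_vec n"
  shows "w \<in> span (S \<union> set L) \<longleftrightarrow> (\<exists>s h. s \<in> span S \<and> w = s + lincomb_nth h L)"
proof -
  obtain LS where LS: "set LS = S" "span S = range (\<lambda>c. lincomb_nth c LS)"
    by (rule obtain_list_span[OF S])
  have sp: "span (S \<union> set L) = range (\<lambda>c. lincomb_nth c (LS @ L))"
    using span_eq_range_lincomb_nth[of "LS @ L"] LS(1) S(2) L by simp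
  show ?thesis
  proof
    assume "w \<in> span (S \<union> set L)"
    then obtain c where "w = lincomb_nth c (LS @ L)" unfolding sp by auto
    then show "\<exists>s h. s \<in> span S \<and> w = s + lincomb_nth h L"
      unfolding LS(2) lincomb_nth_append by blast
  next
    assume "\<exists>s h. s \<in> span S \<and> w = s + lincomb_nth h L"
    then obtain c h where w: "w = lincomb_nth c LS + lincomb_nth h L" unfolding LS(2) by auto
    define d where "d t = (if t < length LS then c t else h (t - length LS))" for t
    have "lincomb_nth d LS = lincomb_nth c LS" by (rule lincomb_nth_cong) (simp add: d_def)
    moreover have "(\<lambda>t. d (t + length LS)) = h" by (simp add: d_def)
    ultimately have "w = lincomb_nth d (LS @ L)" using w by (simp add: lincomb_nth_append)
    then show "w \<in> span (S \<union> set L)" unfolding sp by simp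
  qed
qed

lemma in_span_insert_iff:
  assumes S: "finite S" "S \<subseteq> carrier_vec n" and v: "v \<in> carrier_vec n"
  shows "w \<in> span (insert v S) \<longleftrightarrow> w \<in> carrier_vec n \<and> (\<exists>a. w - a \<cdot>\<^sub>v v \<in> span S)"
proof -
  obtain L where L: "set L = S" "span S = range (\<lambda>c. lincomb_nth c L)" by (rule obtain_list_span[OF S])
  have sv: "set (v # L) \<subseteq> carrier_vec n" using L(1) S(2) v by simp
  have span2: "span (insert v S) = range (\<lambda>c. lincomb_nth c (v # L))"
    using span_eq_range_lincomb_nth[OF sv] L(1) by simp
  show ?thesis
  proof
    assume "w \<in> span (insert v S)"
    then obtain c where w: "w = lincomb_nth c (v # L)" using span2 by auto
    have "w - c 0 \<cdot>\<^sub>v v = lincomb_nth (c \<circ> Suc) L"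
      unfolding w lincomb_nth_Cons[OF v] by (rule eq_vecI) (use v in simp_all)
    then have "w - c 0 \<cdot>\<^sub>v v \<in> span S" unfolding L(2) by simp
    then show "w \<in> carrier_vec n \<and> (\<exists>a. w - a \<cdot>\<^sub>v v \<in> span S)" using w by auto
  next
    assume "w \<in> carrier_vec n \<and> (\<exists>a. w - a \<cdot>\<^sub>v v \<in> span S)"
    then obtain a c where wc: "w \<in> carrier_vec n" "w - a \<cdot>\<^sub>v v = lincomb_nth c L" unfolding L(2) by auto
    have "w = lincomb_nth (case_nat a c) (v # L)"
      unfolding lincomb_nth_Cons[OF v]
    proof (rule eq_vecI)
      fix j assume j: "j < dim_vec (case_nat a c 0 \<cdot>\<^sub>v v + lincomb_nth (case_nat a c \<circ> Suc) L)"
      have "(w - a \<cdot>\<^sub>v v) $ j = lincomb_nth c L $ j" by (simp only: wc(2))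
      then have e: "w $ j - a * v $ j = (\<Sum>t<length L. c t * L ! t $ j)" using j wc(1) v by simp
      then show "w $ j = (case_nat a c 0 \<cdot>\<^sub>v v + lincomb_nth (case_nat a c \<circ> Suc) L) $ j"
        using j wc v by (simp add: o_def algebra_simps)
    qed (use wc in simp)
    then show "w \<in> span (insert v S)" unfolding span2 by simp
  qed
qed

lemma smult_add_in_span_inj:
  assumes S: "finite S" "S \<subseteq> carrier_vec n" and v: "v \<in> carrier_vec n" "v \<notin> span S"
    and st: "s \<in> span S" "t \<in> span S" and eq: "a \<cdot>\<^sub>v v + s = b \<cdot>\<^sub>v v + t"
  shows "a = b \<and> s = t"
proof -
  obtain L where L: "set L = S" "span S = range (\<lambda>c. lincomb_nth c L)" by (rule obtain_list_span[OF S])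
  obtain c where c: "s = lincomb_nth c L" using st(1) unfolding L(2) by auto
  obtain d where d: "t = lincomb_nth d L" using st(2) unfolding L(2) by auto
  have eq_j: "a * v $ j + s $ j = b * v $ j + t $ j" if "j < n" for j
    using arg_cong[OF eq, of "\<lambda>w. w $ j"] that v by (simp add: c d)
  have ab: "a = b"
  proof (rule ccontr)
    assume ab: "a \<noteq> b"
    have "v = lincomb_nth (\<lambda>i. (d i - c i) / (a - b)) L"
    proof (rule eq_vecI)
      fix j assume "j < dim_vec (lincomb_nth (\<lambda>i. (d i - c i) / (a - b)) L)"
      then have j: "j < n" by simp
      then have "v $ j = (t $ j - s $ j) / (a - b)" using eq_j[OF j] ab by (simp add: field_simps)
      then show "v $ j = lincomb_nth (\<lambda>i. (d i - c i) / (a - b)) L $ j"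
        using j by (simp add: c d sum_divide_distrib[symmetric] sum_subtractf[symmetric] algebra_simps)
    qed (use v in simp)
    then show False using v by (simp add: L(2))
  qed
  moreover have "s = t" by (rule eq_vecI) (use eq_j ab in \<open>simp_all add: c d\<close>)
  ultimately show ?thesis ..
qed

lemma card_span_insert:
  assumes S: "finite S" "S \<subseteq> carrier_vec n" and v: "v \<in> carrier_vec n" "v \<notin> span S"
  shows "card (span (insert v S)) = CARD('a) * card (span S)"
proof -
  have "bij_betw (\<lambda>(a, s). a \<cdot>\<^sub>v v + s) ((UNIV::'a set) \<times> span S) (span (insert v S))"
  proof (rule bij_betwI')
    fix x y assume "x \<in> (UNIV::'a set) \<times> span S" "y \<in> (UNIV::'a set) \<times> span S"
    then show "((\<lambda>(a, s). a \<cdot>\<^sub>v v + s) x = (\<lambda>(a, s). a \<cdot>\<^sub>v v + s) y) = (x = y)"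
      using smult_add_in_span_inj[OF S v] by auto
  next
    fix x assume x: "x \<in> (UNIV::'a set) \<times> span S"
    then obtain a s where xa: "x = (a, s)" "s \<in> span S" by auto
    have sc: "s \<in> carrier_vec n" using xa(2) span_subset_carrier[OF S(2)] by blast
    have "a \<cdot>\<^sub>v v + s - a \<cdot>\<^sub>v v = s" by (rule eq_vecI) (use sc v in simp_all)
    then show "(\<lambda>(a, s). a \<cdot>\<^sub>v v + s) x \<in> span (insert v S)"
      unfolding in_span_insert_iff[OF S v(1)] using xa sc v by (metis add_carrier_vec smult_carrier_vec case_prod_conv)
  next
    fix w assume "w \<in> span (insert v S)"
    then obtain a where wa: "w \<in> carrier_vec n" "w - a \<cdot>\<^sub>v v \<in> span S"
      unfolding in_span_insert_iff[OF S v(1)] by auto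
    have "w = a \<cdot>\<^sub>v v + (w - a \<cdot>\<^sub>v v)" by (rule eq_vecI) (use wa v in simp_all)
    then show "\<exists>x\<in>(UNIV::'a set) \<times> span S. w = (\<lambda>(a, s). a \<cdot>\<^sub>v v + s) x" using wa(2) by auto
  qed
  from bij_betw_same_card[OF this] show ?thesis by (simp add: card_cartesian_product)
qed

lemma span_insert_in_span: "S \<subseteq> carrier_vec n \<Longrightarrow> v \<in> span S \<Longrightarrow> span (insert v S) = span S"
  using already_in_span[of S v] by simp

lemma card_span_eq_power_ex: "finite S \<Longrightarrow> S \<subseteq> carrier_vec n \<Longrightarrow> \<exists>d. card (span S) = CARD('a) ^ d"
proof (induction S rule: finite_induct)
  case empty
  then show ?case by (intro exI[of _ 0]) (simp add: span_empty)
next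
  case (insert v S)
  then obtain d where d: "card (span S) = CARD('a) ^ d" by auto
  show ?case
  proof (cases "v \<in> span S")
    case True
    then show ?thesis using span_insert_in_span[of S v] insert d by auto
  next
    case False
    then show ?thesis using card_span_insert[of S v] insert d by (intro exI[of _ "Suc d"]) auto
  qed
qed

text \<open>The dimension of a span, read off from its cardinality \<open>q^d\<close>: the probabilistic
  arguments below only count vectors, so this avoids the abstract dimension of a vector space
  (which enters only through \<open>span_eq_carrier_iff_dim\<close>).\<close>

definition span_rank :: "'a vec set \<Rightarrow> nat" where
  "span_rank S = (THE d. card (span S) = CARD('a) ^ d)"

lemma card_span_eq_power:
  assumes "finite S" "S \<subseteq> carrier_vec n"
  shows "card (span S) = CARD('a) ^ span_rank S"
proof -
  obtain d where d: "card (span S) = CARD('a) ^ d" using card_span_eq_power_ex[OF assms] by blast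
  have "span_rank S = d" unfolding span_rank_def
    by (rule the_equality) (use d two_le_CARD_field[where 'a = 'a] in \<open>auto simp: power_inject_exp\<close>)
  then show ?thesis using d by simp
qed

lemma span_rank_unique:
  "finite S \<Longrightarrow> S \<subseteq> carrier_vec n \<Longrightarrow> card (span S) = CARD('a) ^ d \<Longrightarrow> span_rank S = d"
  using card_span_eq_power two_le_CARD_field[where 'a = 'a] by (simp add: power_inject_exp)

lemma span_rank_le:
  assumes "finite S" "S \<subseteq> carrier_vec n"
  shows "span_rank S \<le> n"
proof -
  have "card (span S) \<le> card (carrier_vec n :: 'a vec set)"
    by (rule card_mono) (auto simp: span_subset_carrier[OF assms(2)])
  then have "CARD('a) ^ span_rank S \<le> CARD('a) ^ n"
    using card_span_eq_power[OF assms] by (simp add: card_carrier_vec)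
  then show ?thesis using two_le_CARD_field[where 'a = 'a] by (simp add: power_le_imp_le_exp)
qed

lemma span_eq_carrier_iff_span_rank:
  assumes "finite S" "S \<subseteq> carrier_vec n"
  shows "span S = carrier_vec n \<longleftrightarrow> span_rank S = n"
proof
  assume "span S = carrier_vec n"
  then show "span_rank S = n" using span_rank_unique[OF assms] by (simp add: card_carrier_vec)
next
  assume "span_rank S = n"
  then have "card (span S) = card (carrier_vec n :: 'a vec set)"
    using card_span_eq_power[OF assms] by (simp add: card_carrier_vec)
  then show "span S = carrier_vec n"
    using card_subset_eq[OF finite_carrier_vec span_subset_carrier[OF assms(2)]] by simp
qed

lemma span_rank_empty: "span_rank {} = 0"
  by (rule span_rank_unique) (auto simp: span_empty)

lemma span_rank_insert_in:
  "finite S \<Longrightarrow> S \<subseteq> carrier_vec n \<Longrightarrow> v \<in> span S \<Longrightarrow> span_rank (insert v S) = span_rank S"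
  using span_insert_in_span unfolding span_rank_def by simp

lemma span_rank_insert_notin:
  assumes "finite S" "S \<subseteq> carrier_vec n" "v \<in> carrier_vec n" "v \<notin> span S"
  shows "span_rank (insert v S) = Suc (span_rank S)"
  by (rule span_rank_unique) (use assms card_span_insert[OF assms] card_span_eq_power[OF assms(1,2)] in auto)

lemma span_eq_carrier_iff_dim:
  assumes "set ws \<subseteq> carrier_vec n"
  shows "vectorspace.dim class_ring (span_vs (set ws)) = n \<longleftrightarrow> span (set ws) = carrier_vec n"
proof
  assume sp: "span (set ws) = carrier_vec n"
  have "span_vs (set ws) = V" unfolding sp by (simp add: module_vec_def)
  then show "vectorspace.dim class_ring (span_vs (set ws)) = n" using dim_is_n by simp
next
  assume dm: "vectorspace.dim class_ring (span_vs (set ws)) = n"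
  have "{} \<subseteq> set ws \<and> lin_indpt {}"
    by (metis (no_types) empty_subsetI fin_dim finite_basis_exists subset_li_is_li vec_vs vectorspace.basis_def)
  then obtain U where U: "finite U" "maximal U (\<lambda>T. T \<subseteq> set ws \<and> lin_indpt T)"
    using maximal_exists_superset[of "set ws" "\<lambda>T. T \<subseteq> set ws \<and> lin_indpt T" "{}"] by auto
  have cU: "card U = n" using dim_span[OF assms _ U(2)] dm by simp
  have Uw: "U \<subseteq> set ws" "lin_indpt U" using U(2) unfolding maximal_def by auto
  have "basis U"
    by (rule dim_li_is_basis) (use U(1) Uw assms cU dim_is_n in auto)
  then have "span U = carrier_vec n" unfolding basis_def by simp
  moreover have "span U \<subseteq> span (set ws)" by (rule span_is_monotone[OF Uw(1)])
  ultimately show "span (set ws) = carrier_vec n" using span_subset_carrier[OF assms] by blast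
qed

lemma prob_uniform_in_span:
  assumes "S \<subseteq> carrier_vec n"
  shows "measure_pmf.prob (pmf_of_set (carrier_vec n)) (span S) = card (span S) / CARD('a) ^ n"
proof -
  have "carrier_vec n \<inter> span S = span S" using span_subset_carrier[OF assms] by blast
  then show ?thesis by (simp add: measure_pmf_of_set card_carrier_vec carrier_vec_nonempty)
qed

lemma expectation_span_rank_insert:
  fixes f :: "nat \<Rightarrow> real"
  assumes p: "set_pmf p \<subseteq> carrier_vec n" and S: "finite S" "S \<subseteq> carrier_vec n"
    and p_span: "measure_pmf.prob p (span S) = card (span S) / CARD('a) ^ n"
  shows "measure_pmf.expectation p (\<lambda>y. f (span_rank (insert y S)))
    = real CARD('a) ^ span_rank S / real CARD('a) ^ n * f (span_rank S)
      + (1 - real CARD('a) ^ span_rank S / real CARD('a) ^ n) * f (Suc (span_rank S))"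
proof -
  have "measure_pmf.expectation p (\<lambda>y. f (span_rank (insert y S)))
      = measure_pmf.expectation p (\<lambda>y. if y \<in> span S then f (span_rank S) else f (Suc (span_rank S)))"
    using p by (intro integral_cong_AE AE_pmfI)
      (auto simp: span_rank_insert_in[OF S] span_rank_insert_notin[OF S])
  then show ?thesis
    unfolding expectation_if Collect_mem_eq p_span card_span_eq_power[OF S] by (simp add: mult.commute)
qed

lemma prob_span_complete:
  fixes p :: "'a vec pmf" and D :: "'a vec set"
  assumes p_set: "set_pmf p \<subseteq> carrier_vec n"
    and p_span: "\<And>S. finite S \<Longrightarrow> S \<subseteq> carrier_vec n \<Longrightarrow> D \<subseteq> S \<Longrightarrow>
                   measure_pmf.prob p (span S) = card (span S) / CARD('a) ^ n"
    and R: "finite R" and S: "finite S" "S \<subseteq> carrier_vec n" "D \<subseteq> S"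
  shows "measure_pmf.prob (Pi_pmf R dflt (\<lambda>_. p)) {f. span (S \<union> f ` R) = carrier_vec n}
      = Pfull CARD('a) (card R) (n - span_rank S)"
  using R S
proof (induction R arbitrary: S rule: finite_induct)
  case empty
  then show ?case
    using span_eq_carrier_iff_span_rank[of S] span_rank_le[of S] Pfull_eq_0[of 0 "n - span_rank S"]
    by auto
next
  case (insert x R)
  let ?q = "CARD('a)" and ?r = "span_rank S"
  have "{f. f(x := y) \<in> {f. span (S \<union> f ` insert x R) = carrier_vec n}}
      = {f. span (insert y S \<union> f ` R) = carrier_vec n}" for y
    by (simp only: mem_Collect_eq image_fun_upd_insert[OF insert.hyps(2)] Un_insert_left Un_insert_right)
  then have "measure_pmf.prob (Pi_pmf (insert x R) dflt (\<lambda>_. p)) {f. span (S \<union> f ` insert x R) = carrier_vec n}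
     = measure_pmf.expectation p (\<lambda>y. measure_pmf.prob (Pi_pmf R dflt (\<lambda>_. p))
          {f. span (insert y S \<union> f ` R) = carrier_vec n})"
    by (simp only: measure_Pi_pmf_insert[OF insert.hyps])
  also have "\<dots> = measure_pmf.expectation p (\<lambda>y. Pfull ?q (card R) (n - span_rank (insert y S)))"
    using insert.prems p_set by (intro integral_cong_AE AE_pmfI insert.IH) auto
  also have "\<dots> = real ?q ^ ?r / real ?q ^ n * Pfull ?q (card R) (n - ?r)
      + (1 - real ?q ^ ?r / real ?q ^ n) * Pfull ?q (card R) (n - Suc ?r)"
    by (rule expectation_span_rank_insert[OF p_set insert.prems(1,2) p_span[OF insert.prems]])
  also have "\<dots> = Pfull ?q (card (insert x R)) (n - ?r)"
  proof (cases "?r = n")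
    case False
    then have "n - ?r \<ge> 1" using span_rank_le[OF insert.prems(1,2)] by simp
    moreover have "real ?q ^ ?r / real ?q ^ n = 1 / real ?q ^ (n - ?r)"
      using span_rank_le[OF insert.prems(1,2)] by (simp add: power_diff)
    ultimately show ?thesis using Pfull_Suc[of ?q "n - ?r" "card R"] insert.hyps
      by (simp add: Suc_diff_Suc)
  qed (use insert.hyps in simp)
  finally show ?case .
qed

lemma prob_span_rank:
  assumes A: "finite A" and r: "r \<le> n"
  shows "measure_pmf.prob (Pi_pmf A dflt (\<lambda>_. pmf_of_set (carrier_vec n))) {f. span_rank (f ` A) = r}
      = Prank CARD('a) r (card A) n"
  using A r
proof (induction A arbitrary: r rule: finite_induct)
  case empty
  then show ?case using Prank_0_left[of "CARD('a)" r n] two_le_CARD_field[where 'a = 'a] by (simp add: span_rank_empty)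
next
  case (insert x A)
  let ?q = "CARD('a)"
  let ?U = "pmf_of_set (carrier_vec n) :: 'a vec pmf"
  let ?M = "Pi_pmf A dflt (\<lambda>_. ?U)"
  have fA: "f ` A \<subseteq> carrier_vec n" if "f \<in> set_pmf ?M" for f
    using set_Pi_pmf_uniform_subset[OF insert.hyps(1) _ carrier_vec_nonempty that] by simp
  define g where "g d = (if d = r then real ?q ^ d / real ?q ^ n else 0)
                      + (if Suc d = r then 1 - real ?q ^ d / real ?q ^ n else 0)" for d
  have "{y. f(x := y) \<in> {f. span_rank (f ` insert x A) = r}} = {y. span_rank (insert y (f ` A)) = r}" for f
    by (simp only: mem_Collect_eq image_fun_upd_insert[OF insert.hyps(2)])
  then have "measure_pmf.prob (Pi_pmf (insert x A) dflt (\<lambda>_. ?U)) {f. span_rank (f ` insert x A) = r}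
     = measure_pmf.expectation ?M (\<lambda>f. measure_pmf.prob ?U {y. span_rank (insert y (f ` A)) = r})"
    by (simp only: measure_Pi_pmf_insert'[OF insert.hyps])
  also have "\<dots> = measure_pmf.expectation ?M (\<lambda>f. g (span_rank (f ` A)))"
  proof (intro integral_cong_AE AE_pmfI)
    fix f assume "f \<in> set_pmf ?M"
    then have T: "finite (f ` A)" "f ` A \<subseteq> carrier_vec n" using insert.hyps(1) fA by auto
    have "measure_pmf.prob ?U {y. span_rank (insert y (f ` A)) = r}
        = measure_pmf.expectation ?U (\<lambda>y. (\<lambda>d. if d = r then 1 else 0) (span_rank (insert y (f ` A))))"
      using expectation_if[of ?U "\<lambda>y. span_rank (insert y (f ` A)) = r" 1 0] by simp
    also have "\<dots> = g (span_rank (f ` A))"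
      using expectation_span_rank_insert[where f = "\<lambda>d. if d = r then 1 else 0", OF _ T prob_uniform_in_span[OF T(2)]]
      by (simp add: g_def carrier_vec_nonempty)
    finally show "measure_pmf.prob ?U {y. span_rank (insert y (f ` A)) = r} = g (span_rank (f ` A))" .
  qed auto
  also have "\<dots> = (\<Sum>d\<le>n. g d * measure_pmf.prob ?M {f. span_rank (f ` A) = d})"
    using fA span_rank_le insert.hyps(1) by (intro expectation_finite_range) auto
  also have "\<dots> = (\<Sum>d\<le>n. g d * Prank ?q d (card A) n)"
    using insert.IH by simp
  also have "\<dots> = Prank ?q r (card (insert x A)) n"
    using Prank_Suc_eq_sum[of ?q r n "card A"] two_le_CARD_field[where 'a = 'a] insert.hyps insert.prems by (simp add: g_def)
  finally show ?case .
qed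

lemma prob_lincomb_add_in_span:
  assumes S: "finite S" "S \<subseteq> carrier_vec n" and L: "set L \<subseteq> carrier_vec n"
    and y: "y \<in> span (S \<union> set L)"
  shows "measure_pmf.prob (uniform_coeffs (length L)) {c. lincomb_nth c L + a \<cdot>\<^sub>v y \<in> span S}
       = measure_pmf.prob (uniform_coeffs (length L)) {c. lincomb_nth c L \<in> span S}"
proof -
  obtain s h where sh: "s \<in> span S" "y = s + lincomb_nth h L"
    using in_span_Un_list_iff[OF S L] y by blast
  have s: "s \<in> carrier_vec n" using sh(1) span_subset_carrier[OF S(2)] by blast
  define shift where "shift c t = (if t < length L then c t + a * h t else 0)" for c t
  have as: "a \<cdot>\<^sub>v s \<in> span S" by (rule smult_in_span[OF S(2) sh(1)])
  have "lincomb_nth c L + a \<cdot>\<^sub>v y = a \<cdot>\<^sub>v s + lincomb_nth (shift c) L" for c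
    by (rule eq_vecI) (use s in \<open>auto simp: sh(2) shift_def algebra_simps sum.distrib
        sum_distrib_left intro!: sum.cong\<close>)
  then have "{c. lincomb_nth c L + a \<cdot>\<^sub>v y \<in> span S} = shift -` {c. lincomb_nth c L \<in> span S}"
    using span_add[OF S(2) as] by auto
  then have "measure_pmf.prob (uniform_coeffs (length L)) {c. lincomb_nth c L + a \<cdot>\<^sub>v y \<in> span S}
      = measure_pmf.prob (map_pmf shift (uniform_coeffs (length L))) {c. lincomb_nth c L \<in> span S}"
    by simp
  also have "map_pmf shift (uniform_coeffs (length L)) = uniform_coeffs (length L)"
    unfolding shift_def by (rule map_uniform_coeffs_translate)
  finally show ?thesis .
qed

lemma lincomb_add_notin_span:
  assumes S: "finite S" "S \<subseteq> carrier_vec n" and L: "set L \<subseteq> carrier_vec n"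
    and y: "y \<in> carrier_vec n" "y \<notin> span (S \<union> set L)" and a: "a \<noteq> 0"
  shows "lincomb_nth c L + a \<cdot>\<^sub>v y \<notin> span S"
proof
  let ?w = "lincomb_nth c L + a \<cdot>\<^sub>v y"
  assume "?w \<in> span S"
  then have "(1 / a) \<cdot>\<^sub>v ?w \<in> span S" by (rule smult_in_span[OF S(2)])
  moreover have "y = (1 / a) \<cdot>\<^sub>v ?w + lincomb_nth (\<lambda>t. - c t / a) L"
    by (rule eq_vecI) (use y a in \<open>auto simp: field_simps sum_divide_distrib[symmetric] sum_negf\<close>)
  ultimately have "y \<in> span (S \<union> set L)" using in_span_Un_list_iff[OF S L] by blast
  then show False using y(2) by simp
qed

lemma prob_lincomb_snoc:
  assumes y: "y \<in> carrier_vec n"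
  shows "measure_pmf.prob (uniform_coeffs (length (L @ [y]))) {c. lincomb_nth c (L @ [y]) \<in> W}
      = measure_pmf.expectation (pmf_of_set UNIV)
          (\<lambda>a. measure_pmf.prob (uniform_coeffs (length L)) {c. lincomb_nth c L + a \<cdot>\<^sub>v y \<in> W})"
proof -
  have "lincomb_nth (c(length L := a)) (L @ [y]) = lincomb_nth c L + a \<cdot>\<^sub>v y" for c a
    unfolding lincomb_nth_snoc[OF y] by (simp add: lincomb_nth_cong[of L "c(length L := a)" c])
  then show ?thesis
    unfolding uniform_coeffs_def length_append_singleton lessThan_Suc
    by (subst measure_Pi_pmf_insert) simp_all
qed

lemma prob_lincomb_in_span:
  assumes S: "finite S" "S \<subseteq> carrier_vec n" and L: "set L \<subseteq> carrier_vec n"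
  shows "measure_pmf.prob (uniform_coeffs (length L)) {c. lincomb_nth c L \<in> span S}
           * card (span (S \<union> set L)) = card (span S)"
  using L
proof (induction L rule: rev_induct)
  case Nil
  have "lincomb_nth c [] = 0\<^sub>v n" for c by (rule eq_vecI) auto
  then have "{c. lincomb_nth c [] \<in> span S} = UNIV" using zero_in_span_vec[OF S] by auto
  then show ?case by (simp add: uniform_coeffs_def)
next
  case (snoc y L)
  let ?q = "CARD('a)"
  let ?U = "uniform_coeffs (length L) :: (nat \<Rightarrow> 'a) pmf"
  let ?T = "S \<union> set L"
  define P0 where "P0 = measure_pmf.prob ?U {c. lincomb_nth c L \<in> span S}"
  have y: "y \<in> carrier_vec n" and L: "set L \<subseteq> carrier_vec n" using snoc.prems by auto
  have IH: "P0 * card (span ?T) = card (span S)" using snoc.IH L unfolding P0_def by simp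
  have T: "finite ?T" "?T \<subseteq> carrier_vec n" using S L by auto
  have "measure_pmf.prob (uniform_coeffs (length (L @ [y]))) {c. lincomb_nth c (L @ [y]) \<in> span S}
      = measure_pmf.expectation (pmf_of_set UNIV)
          (\<lambda>a. measure_pmf.prob ?U {c. lincomb_nth c L + a \<cdot>\<^sub>v y \<in> span S})"
    by (rule prob_lincomb_snoc[OF y])
  also have "\<dots> * card (span (S \<union> set (L @ [y]))) = card (span S)"
  proof (cases "y \<in> span ?T")
    case True
    then have "span (S \<union> set (L @ [y])) = span ?T"
      using span_insert_in_span[OF T(2)] by (simp add: Un_insert_right)
    then show ?thesis using IH prob_lincomb_add_in_span[OF S L True] by (simp add: P0_def)
  next
    case False
    have "lincomb_nth c L + 0 \<cdot>\<^sub>v y = lincomb_nth c L" for c by (rule eq_vecI) (use y in auto)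
    then have "measure_pmf.prob ?U {c. lincomb_nth c L + a \<cdot>\<^sub>v y \<in> span S} = (if a = 0 then P0 else 0)" for a
      using lincomb_add_notin_span[OF S L y False] by (auto simp: P0_def)
    then have "measure_pmf.expectation (pmf_of_set UNIV)
          (\<lambda>a. measure_pmf.prob ?U {c. lincomb_nth c L + a \<cdot>\<^sub>v y \<in> span S}) = P0 / ?q"
      by (simp add: expectation_if measure_pmf_of_set)
    then show ?thesis
      using IH card_span_insert[OF T y False] by (simp add: Un_insert_right)
  qed
  finally show ?case .
qed

lemma prob_lincomb_in_span_spanning:
  assumes L: "set L \<subseteq> carrier_vec n" and full: "span (D \<union> set L) = carrier_vec n"
    and S: "finite S" "S \<subseteq> carrier_vec n" "D \<subseteq> S"
  shows "measure_pmf.prob (map_pmf (\<lambda>c. lincomb_nth c L) (uniform_coeffs (length L))) (span S)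
       = card (span S) / CARD('a) ^ n"
proof -
  have "span (D \<union> set L) \<subseteq> span (S \<union> set L)" by (rule span_is_monotone) (use S in auto)
  then have "span (S \<union> set L) = carrier_vec n" using full span_subset_carrier[of "S \<union> set L"] S L by auto
  then show ?thesis using prob_lincomb_in_span[OF S(1,2) L] by (simp add: vimage_def card_carrier_vec field_simps)
qed

lemma span_Un_subset_span_Un:
  assumes DL: "D \<union> set L \<subseteq> carrier_vec n" and Z: "Z \<subseteq> span (set L)"
  shows "span (D \<union> Z) \<subseteq> span (D \<union> set L)"
proof (rule span_subsetI[OF DL])
  have "span (set L) \<subseteq> span (D \<union> set L)" by (rule span_is_monotone) auto
  moreover have "D \<subseteq> span (D \<union> set L)" using in_own_span[OF DL] by auto
  ultimately show "D \<union> Z \<subseteq> span (D \<union> set L)" using Z by blast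
qed

lemma prob_span_complete_eq_0:
  assumes DL: "D \<union> set L \<subseteq> carrier_vec n" and not_full: "span (D \<union> set L) \<noteq> carrier_vec n"
    and p: "set_pmf p \<subseteq> span (set L)" and R: "finite R"
  shows "measure_pmf.prob (Pi_pmf R dflt (\<lambda>_. p)) {Z. span (D \<union> Z ` R) = carrier_vec n} = 0"
proof -
  have "span (D \<union> Z ` R) \<noteq> carrier_vec n" if "Z \<in> set_pmf (Pi_pmf R dflt (\<lambda>_. p))" for Z
  proof -
    have "Z ` R \<subseteq> span (set L)"
      using that set_Pi_pmf_subset'[OF R, of dflt "\<lambda>_. p"] p by (fastforce simp: PiE_dflt_def)
    then have "span (D \<union> Z ` R) \<subseteq> span (D \<union> set L)" by (rule span_Un_subset_span_Un[OF DL])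
    then show ?thesis using not_full span_subset_carrier[OF DL] by blast
  qed
  then show ?thesis by (subst measure_pmf_zero_iff) auto
qed

lemma prob_recoded_complete:
  fixes X :: "nat \<Rightarrow> 'a vec" and Bl :: "nat list" and dflt :: "nat \<Rightarrow> 'a"
  assumes fin: "finite A" "finite R" and Bl: "set Bl \<subseteq> A \<union> E" "E \<subseteq> set Bl"
    and X: "X ` (A \<union> E) \<subseteq> carrier_vec n"
  shows "measure_pmf.prob (Pi_pmf R dflt (\<lambda>_. uniform_coeffs (length Bl)))
            {Y. span (X ` A \<union> (\<lambda>i. lincomb_nth (Y i) (map X Bl)) ` R) = carrier_vec n}
       = (if span (X ` A \<union> X ` E) = carrier_vec n then Pfull CARD('a) (card R) (n - span_rank (X ` A)) else 0)"
proof -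
  define L where "L = map X Bl"
  define p where "p = map_pmf (\<lambda>c. lincomb_nth c L) (uniform_coeffs (length Bl))"
  have XA: "finite (X ` A)" "X ` A \<subseteq> carrier_vec n" using fin X by auto
  have L: "set L \<subseteq> carrier_vec n" using X Bl by (auto simp: L_def)
  have XAL: "X ` A \<union> set L = X ` A \<union> X ` E" using Bl by (auto simp: L_def)
  have "Pi_pmf R (lincomb_nth dflt L) (\<lambda>_. p)
      = map_pmf (\<lambda>h. (\<lambda>c. lincomb_nth c L) \<circ> h) (Pi_pmf R dflt (\<lambda>_. uniform_coeffs (length Bl)))"
    unfolding p_def by (rule Pi_pmf_map) (use fin in auto)
  then have "measure_pmf.prob (Pi_pmf R dflt (\<lambda>_. uniform_coeffs (length Bl)))
            {Y. span (X ` A \<union> (\<lambda>i. lincomb_nth (Y i) (map X Bl)) ` R) = carrier_vec n}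
      = measure_pmf.prob (Pi_pmf R (lincomb_nth dflt L) (\<lambda>_. p)) {Z. span (X ` A \<union> Z ` R) = carrier_vec n}"
    by (simp add: vimage_def L_def image_comp o_def)
  also have "\<dots> = (if span (X ` A \<union> X ` E) = carrier_vec n
                   then Pfull CARD('a) (card R) (n - span_rank (X ` A)) else 0)"
  proof (cases "span (X ` A \<union> set L) = carrier_vec n")
    case True
    have p_span: "measure_pmf.prob p (span S) = card (span S) / CARD('a) ^ n"
      if "finite S" "S \<subseteq> carrier_vec n" "X ` A \<subseteq> S" for S
      using prob_lincomb_in_span_spanning[OF L True that] by (simp add: p_def L_def)
    have "set_pmf p \<subseteq> carrier_vec n" by (auto simp: p_def)
    from prob_span_complete[OF this p_span fin(2) XA] have
      "measure_pmf.prob (Pi_pmf R (lincomb_nth dflt L) (\<lambda>_. p)) {Z. span (X ` A \<union> Z ` R) = carrier_vec n}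
        = Pfull CARD('a) (card R) (n - span_rank (X ` A))" by simp
    then show ?thesis using True XAL by simp
  next
    case False
    have "X ` A \<union> set L \<subseteq> carrier_vec n" using XA L by auto
    moreover have "set_pmf p \<subseteq> span (set L)" using lincomb_nth_in_span[OF L] by (auto simp: p_def)
    ultimately show ?thesis using prob_span_complete_eq_0[OF _ False _ fin(2)] False XAL by simp
  qed
  finally show ?thesis .
qed

lemma prob_rank_and_complete:
  fixes A E :: "nat set" and dflt :: "'a vec"
  assumes fin: "finite A" "finite E" and disj: "A \<inter> E = {}" and i: "i \<le> n"
  shows "measure_pmf.prob (Pi_pmf (A \<union> E) dflt (\<lambda>_. pmf_of_set (carrier_vec n)))
           {X. span_rank (X ` A) = i \<and> span (X ` A \<union> X ` E) = carrier_vec n}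
         = Prank CARD('a) i (card A) n * Pfull CARD('a) (card E) (n - i)"
proof -
  let ?U = "pmf_of_set (carrier_vec n) :: 'a vec pmf"
  let ?M = "Pi_pmf A dflt (\<lambda>_. ?U)"
  let ?N = "Pi_pmf E dflt (\<lambda>_. ?U)"
  have "measure_pmf.prob (Pi_pmf (A \<union> E) dflt (\<lambda>_. ?U))
          {X. span_rank (X ` A) = i \<and> span (X ` A \<union> X ` E) = carrier_vec n}
      = measure_pmf.expectation ?M
          (\<lambda>f. measure_pmf.prob ?N {g. span_rank (f ` A) = i \<and> span (f ` A \<union> g ` E) = carrier_vec n})"
    using measure_Pi_pmf_union[OF fin disj, where P = "\<lambda>U V. span_rank U = i \<and> span (U \<union> V) = carrier_vec n"]
    by simp
  also have "\<dots> = measure_pmf.expectation ?M (\<lambda>f. if span_rank (f ` A) = i then Pfull CARD('a) (card E) (n - i) else 0)"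
  proof (intro integral_cong_AE AE_pmfI)
    fix f assume f: "f \<in> set_pmf ?M"
    have fA: "finite (f ` A)" "f ` A \<subseteq> carrier_vec n"
      using set_Pi_pmf_uniform_subset[OF fin(1) _ carrier_vec_nonempty f] fin by auto
    have "measure_pmf.prob ?N {g. span (f ` A \<union> g ` E) = carrier_vec n} = Pfull CARD('a) (card E) (n - span_rank (f ` A))"
      using prob_uniform_in_span by (intro prob_span_complete[of ?U "{}"]) (auto simp: fin fA carrier_vec_nonempty)
    then show "measure_pmf.prob ?N {g. span_rank (f ` A) = i \<and> span (f ` A \<union> g ` E) = carrier_vec n}
        = (if span_rank (f ` A) = i then Pfull CARD('a) (card E) (n - i) else 0)" by simp
  qed auto
  also have "\<dots> = Prank CARD('a) i (card A) n * Pfull CARD('a) (card E) (n - i)"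
    unfolding expectation_if using prob_span_rank[OF fin(1) i] by simp
  finally show ?thesis .
qed

text \<open>The source rows in \<open>A\<close> reach D directly, those in \<open>E\<close> only reach R, and the \<open>R\<close>
  recoded rows are combinations of the rows listed in \<open>Bl\<close>.\<close>

lemma expectation_prob_complete:
  fixes A E R :: "nat set" and Bl :: "nat list" and dflt' :: "nat \<Rightarrow> 'a" and dflt :: "'a vec"
  assumes fin: "finite A" "finite E" "finite R" and disj: "A \<inter> E = {}"
    and Bl: "set Bl \<subseteq> A \<union> E" "E \<subseteq> set Bl"
  shows "measure_pmf.expectation (Pi_pmf (A \<union> E) dflt (\<lambda>_. pmf_of_set (carrier_vec n)))
     (\<lambda>X. measure_pmf.prob (Pi_pmf R dflt' (\<lambda>_. uniform_coeffs (length Bl)))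
            {Y. span (X ` A \<union> (\<lambda>i. lincomb_nth (Y i) (map X Bl)) ` R) = carrier_vec n})
   = (\<Sum>i\<le>n. Prank CARD('a) i (card A) n * Pfull CARD('a) (card E) (n - i) * Pfull CARD('a) (card R) (n - i))"
proof -
  let ?PX = "Pi_pmf (A \<union> E) dflt (\<lambda>_. pmf_of_set (carrier_vec n)) :: (nat \<Rightarrow> 'a vec) pmf"
  let ?full = "\<lambda>X. span (X ` A \<union> X ` E) = carrier_vec n"
  define g where "g ib = (if snd ib then Pfull CARD('a) (card R) (n - fst ib) else 0)" for ib :: "nat \<times> bool"
  have X: "X ` (A \<union> E) \<subseteq> carrier_vec n" if "X \<in> set_pmf ?PX" for X
    using set_Pi_pmf_uniform_subset[OF _ _ carrier_vec_nonempty that] fin by auto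
  have "measure_pmf.expectation ?PX
     (\<lambda>X. measure_pmf.prob (Pi_pmf R dflt' (\<lambda>_. uniform_coeffs (length Bl)))
            {Y. span (X ` A \<union> (\<lambda>i. lincomb_nth (Y i) (map X Bl)) ` R) = carrier_vec n})
     = measure_pmf.expectation ?PX (\<lambda>X. g (span_rank (X ` A), ?full X))"
    using X by (intro integral_cong_AE AE_pmfI) (simp_all add: prob_recoded_complete[OF fin(1,3) Bl] g_def)
  also have "\<dots> = (\<Sum>ib\<in>{..n} \<times> UNIV. g ib * measure_pmf.prob ?PX {X. (span_rank (X ` A), ?full X) = ib})"
  proof (rule expectation_finite_range)
    fix X assume "X \<in> set_pmf ?PX"
    then have "span_rank (X ` A) \<le> n" using X span_rank_le[of "X ` A"] fin by auto
    then show "(span_rank (X ` A), ?full X) \<in> {..n} \<times> UNIV" by simp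
  qed simp
  also have "\<dots> = (\<Sum>ib\<in>{..n} \<times> UNIV. g ib * measure_pmf.prob ?PX {X. span_rank (X ` A) = fst ib \<and> ?full X = snd ib})"
    by (rule sum.cong[OF refl]) (simp add: prod_eq_iff)
  also have "\<dots> = (\<Sum>i\<le>n. \<Sum>b\<in>UNIV. g (i, b) * measure_pmf.prob ?PX {X. span_rank (X ` A) = i \<and> ?full X = b})"
    by (simp add: sum.cartesian_product case_prod_beta)
  also have "\<dots> = (\<Sum>i\<le>n. Pfull CARD('a) (card R) (n - i) * measure_pmf.prob ?PX {X. span_rank (X ` A) = i \<and> ?full X})"
    by (simp add: UNIV_bool g_def)
  also have "\<dots> = (\<Sum>i\<le>n. Prank CARD('a) i (card A) n * Pfull CARD('a) (card E) (n - i) * Pfull CARD('a) (card R) (n - i))"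
    by (rule sum.cong) (use prob_rank_and_complete[OF fin(1,2) disj] in auto)
  finally show ?thesis .
qed

lemma row_mult_eq_lincomb_nth:
  assumes G: "G \<in> carrier_mat nr m" and M: "M \<in> carrier_mat m n" and i: "i < nr"
  shows "row (G * M) i = lincomb_nth (\<lambda>t. G $$ (i, t)) (rows M)"
  by (rule eq_vecI) (use G M i in \<open>simp_all add: scalar_prod_def lessThan_atLeast0\<close>)

lemma row_rank_eq_iff_span:
  assumes "set ws \<subseteq> carrier_vec n"
  shows "row_rank n (mat_of_rows n ws) = n \<longleftrightarrow> span (set ws) = carrier_vec n"
  unfolding row_rank_def rank_def using span_eq_carrier_iff_dim[OF assms] assms by simp

lemma rank_received_iff_span:
  fixes C G :: "'a mat"
  assumes C: "C \<in> carrier_mat NS n" and G: "G \<in> carrier_mat NR (length jsR)"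
    and js: "set jsD \<subseteq> {..<NS}" "set jsR \<subseteq> {..<NS}" "set jsRD \<subseteq> {..<NR}"
  defines "X \<equiv> \<lambda>j. if j < NS then row C j else 0\<^sub>v n"
    and "Y \<equiv> \<lambda>i. if i < NR then (\<lambda>t. if t < length jsR then G $$ (i, t) else 0) else (\<lambda>_. 0)"
  shows "row_rank n (mat_of_rows n (sel_rows n C jsD @ sel_rows n (G * mat_of_rows n (sel_rows n C jsR)) jsRD)) = n
     \<longleftrightarrow> span (X ` set jsD \<union> (\<lambda>i. lincomb_nth (Y i) (map X jsR)) ` set jsRD) = carrier_vec n"
proof -
  define CR where "CR = mat_of_rows n (sel_rows n C jsR)"
  have rowsC: "set (map (row C) jsR) \<subseteq> carrier_vec n" using js C by auto
  have CR: "CR \<in> carrier_mat (length jsR) n"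
    unfolding CR_def sel_rows_def using mat_of_rows_carrier[of n "map (row C) jsR"] by simp
  have rows: "rows CR = map X jsR" unfolding CR_def sel_rows_def X_def using rowsC js by auto
  have "set (sel_rows n C jsD @ sel_rows n (G * CR) jsRD) = row C ` set jsD \<union> row (G * CR) ` set jsRD"
    unfolding sel_rows_def by auto
  also have "row C ` set jsD = X ` set jsD" using js unfolding X_def by auto
  also have "row (G * CR) ` set jsRD = (\<lambda>i. lincomb_nth (Y i) (map X jsR)) ` set jsRD"
  proof (rule image_cong[OF refl])
    fix i assume "i \<in> set jsRD"
    then have i: "i < NR" using js by auto
    show "row (G * CR) i = lincomb_nth (Y i) (map X jsR)"
      unfolding row_mult_eq_lincomb_nth[OF G CR i] rows using i by (intro lincomb_nth_cong) (simp add: Y_def)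
  qed
  finally have "set (sel_rows n C jsD @ sel_rows n (G * CR) jsRD) = X ` set jsD \<union> (\<lambda>i. lincomb_nth (Y i) (map X jsR)) ` set jsRD" .
  moreover have "set (sel_rows n C jsD @ sel_rows n (G * CR) jsRD) \<subseteq> carrier_vec n"
    unfolding sel_rows_def using C G CR js by auto
  ultimately show ?thesis using row_rank_eq_iff_span unfolding CR_def by metis
qed

lemma prob_rank_received_given_source:
  fixes C :: "'a mat"
  assumes C: "C \<in> carrier_mat NS n"
    and js: "set jsD \<subseteq> {..<NS}" "set jsR \<subseteq> {..<NS}" "set jsRD \<subseteq> {..<NR}"
  defines "X \<equiv> \<lambda>j. if j < NS then row C j else 0\<^sub>v n"
  shows "measure_pmf.prob (pmf_of_set (carrier_mat NR (length jsR)))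
      {G. row_rank n (mat_of_rows n (sel_rows n C jsD @ sel_rows n (G * mat_of_rows n (sel_rows n C jsR)) jsRD)) = n}
    = measure_pmf.prob (Pi_pmf (set jsRD) (\<lambda>_. 0) (\<lambda>_. uniform_coeffs (length jsR)))
      {Y. span (X ` set jsD \<union> (\<lambda>i. lincomb_nth (Y i) (map X jsR)) ` set jsRD) = carrier_vec n}"
  (is "?lhs = measure_pmf.prob _ {Y. ?ev Y}")
proof -
  let ?UG = "pmf_of_set (carrier_mat NR (length jsR)) :: 'a mat pmf"
  define coeffs where "coeffs G = (\<lambda>i. if i < NR then (\<lambda>t. if t < length jsR then G $$ (i, t) else 0)
                                        else (\<lambda>_. 0 :: 'a))" for G :: "'a mat"
  have "row_rank n (mat_of_rows n (sel_rows n C jsD @ sel_rows n (G * mat_of_rows n (sel_rows n C jsR)) jsRD)) = n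
      \<longleftrightarrow> ?ev (coeffs G)" if "G \<in> carrier_mat NR (length jsR)" for G
    using rank_received_iff_span[OF C that js] unfolding X_def coeffs_def by simp
  then have "{G. row_rank n (mat_of_rows n (sel_rows n C jsD @ sel_rows n (G * mat_of_rows n (sel_rows n C jsR)) jsRD)) = n}
      \<inter> set_pmf ?UG = {G. ?ev (coeffs G)} \<inter> set_pmf ?UG"
    unfolding set_pmf_of_set[OF carrier_mat_nonempty finite_carrier_mat] by blast
  then have "?lhs = measure_pmf.prob ?UG {G. ?ev (coeffs G)}"
    by (metis measure_Int_set_pmf)
  also have "\<dots> = measure_pmf.prob (map_pmf coeffs ?UG) {Y. ?ev Y}"
    by (simp add: vimage_def)
  also have "map_pmf coeffs ?UG = Pi_pmf {..<NR} (\<lambda>_. 0) (\<lambda>_. uniform_coeffs (length jsR))"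
    unfolding coeffs_def by (rule map_coeffs_uniform_mat)
  also have "measure_pmf.prob \<dots> {Y. ?ev Y}
      = measure_pmf.prob (Pi_pmf (set jsRD) (\<lambda>_. 0) (\<lambda>_. uniform_coeffs (length jsR))) {Y. ?ev Y}"
    using js by (intro measure_Pi_pmf_subset[symmetric]) (auto cong: image_cong)
  finally show ?thesis .
qed

lemma prob_rank_received:
  assumes js: "set jsD \<subseteq> {..<NS}" "set jsR \<subseteq> {..<NS}" "set jsRD \<subseteq> {..<NR}"
  shows "pmf (bind_pmf (pmf_of_set (carrier_mat NS n :: 'a mat set)) (\<lambda>C.
            bind_pmf (pmf_of_set (carrier_mat NR (length jsR))) (\<lambda>G.
              return_pmf (row_rank n (mat_of_rows n (sel_rows n C jsD
                @ sel_rows n (G * mat_of_rows n (sel_rows n C jsR)) jsRD)) = n)))) True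
    = decode_prob CARD('a) n (card (set jsD)) (card (set jsR - set jsD)) (card (set jsRD))"
proof -
  let ?UC = "pmf_of_set (carrier_mat NS n) :: 'a mat pmf"
  let ?UG = "pmf_of_set (carrier_mat NR (length jsR)) :: 'a mat pmf"
  let ?UX = "\<lambda>I. Pi_pmf I (0\<^sub>v n) (\<lambda>_. pmf_of_set (carrier_vec n)) :: (nat \<Rightarrow> 'a vec) pmf"
  let ?A = "set jsD" and ?E = "set jsR - set jsD"
  define decodes where "decodes C G \<longleftrightarrow> row_rank n (mat_of_rows n (sel_rows n C jsD
      @ sel_rows n (G * mat_of_rows n (sel_rows n C jsR)) jsRD)) = n" for C G :: "'a mat"
  define k where "k X = measure_pmf.prob (Pi_pmf (set jsRD) (\<lambda>_. 0) (\<lambda>_. uniform_coeffs (length jsR)))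
      {Y. span (X ` ?A \<union> (\<lambda>i. lincomb_nth (Y i) (map X jsR)) ` set jsRD) = carrier_vec n}" for X
  define rows_of where "rows_of C = (\<lambda>j. if j < NS then row C j else 0\<^sub>v n)" for C :: "'a mat"
  have "pmf (bind_pmf ?UC (\<lambda>C. bind_pmf ?UG (\<lambda>G. return_pmf (decodes C G)))) True
      = measure_pmf.prob (bind_pmf ?UC (\<lambda>C. map_pmf (decodes C) ?UG)) {True}"
    by (simp add: map_pmf_def measure_pmf_single)
  also have "\<dots> = measure_pmf.expectation ?UC (\<lambda>C. measure_pmf.prob ?UG {G. decodes C G})"
    by (simp add: measure_bind_pmf vimage_def)
  also have "\<dots> = measure_pmf.expectation ?UC (\<lambda>C. k (rows_of C))"
  proof (intro integral_cong_AE AE_pmfI)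
    fix C assume "C \<in> set_pmf ?UC"
    then have "C \<in> carrier_mat NS n" by (simp add: finite_carrier_mat carrier_mat_nonempty)
    then show "measure_pmf.prob ?UG {G. decodes C G} = k (rows_of C)"
      unfolding k_def rows_of_def decodes_def by (rule prob_rank_received_given_source[OF _ js])
  qed auto
  also have "\<dots> = measure_pmf.expectation (map_pmf rows_of ?UC) k"
    by simp
  also have "map_pmf rows_of ?UC = ?UX {..<NS}"
    unfolding rows_of_def by (rule map_rows_uniform_mat)
  also have "measure_pmf.expectation (?UX {..<NS}) k = measure_pmf.expectation (?UX (?A \<union> ?E)) k"
  proof (rule expectation_Pi_pmf_subset[symmetric])
    fix X :: "nat \<Rightarrow> 'a vec"
    have i: "(\<lambda>x. if x \<in> ?A \<union> ?E then X x else 0\<^sub>v n) ` ?A = X ` ?A" by auto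
    have m: "map (\<lambda>x. if x \<in> ?A \<union> ?E then X x else 0\<^sub>v n) jsR = map X jsR" by auto
    show "k (\<lambda>x. if x \<in> ?A \<union> ?E then X x else 0\<^sub>v n) = k X" unfolding k_def i m ..
  qed (use js in auto)
  also have "\<dots> = decode_prob CARD('a) n (card ?A) (card ?E) (card (set jsRD))"
    unfolding k_def decode_prob_def by (rule expectation_prob_complete) auto
  finally show ?thesis by (simp only: decodes_def)
qed
end

section \<open>The relay network\<close>

lemma relay_success_erasures_first:
  "relay_success TYPE('a::{finite,field}) K NS NR eSD eSR eRD =
    bind_pmf (Pi_pmf {..<NS} False (\<lambda>_. bernoulli_pmf eSR)) (\<lambda>erSR.
    bind_pmf (Pi_pmf {..<NS} False (\<lambda>_. bernoulli_pmf eSD)) (\<lambda>erSD.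
    bind_pmf (Pi_pmf {..<NR} False (\<lambda>_. bernoulli_pmf eRD)) (\<lambda>erRD.
    bind_pmf (pmf_of_set (carrier_mat NS K :: 'a mat set)) (\<lambda>C.
    bind_pmf (pmf_of_set (carrier_mat NR (length (filter (\<lambda>j. \<not> erSR j) [0..<NS])))) (\<lambda>G.
      return_pmf (row_rank K (mat_of_rows K (sel_rows K C (filter (\<lambda>j. \<not> erSD j) [0..<NS])
        @ sel_rows K (G * mat_of_rows K (sel_rows K C (filter (\<lambda>j. \<not> erSR j) [0..<NS])))
                     (filter (\<lambda>i. \<not> erRD i) [0..<NR]))) = K))))))"
proof -
  let ?UC = "pmf_of_set (carrier_mat NS K :: 'a mat set)"
  let ?SD = "Pi_pmf {..<NS} False (\<lambda>_. bernoulli_pmf eSD)"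
  let ?SR = "Pi_pmf {..<NS} False (\<lambda>_. bernoulli_pmf eSR)"
  let ?RD = "Pi_pmf {..<NR} False (\<lambda>_. bernoulli_pmf eRD)"
  have swap_RD: "bind_pmf UG (\<lambda>G. bind_pmf ?RD (F G)) = bind_pmf ?RD (\<lambda>e. bind_pmf UG (\<lambda>G. F G e))"
    for UG :: "'a mat pmf" and F :: "'a mat \<Rightarrow> (nat \<Rightarrow> bool) \<Rightarrow> bool pmf"
    by (rule bind_commute_pmf)
  have swap_C: "bind_pmf ?UC (\<lambda>C. bind_pmf P (F C)) = bind_pmf P (\<lambda>e. bind_pmf ?UC (\<lambda>C. F C e))"
    for P :: "(nat \<Rightarrow> bool) pmf" and F :: "'a mat \<Rightarrow> (nat \<Rightarrow> bool) \<Rightarrow> bool pmf"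
    by (rule bind_commute_pmf)
  have swap_SD: "bind_pmf ?SD (\<lambda>e1. bind_pmf ?SR (F e1)) = bind_pmf ?SR (\<lambda>e. bind_pmf ?SD (\<lambda>e1. F e1 e))"
    for F :: "(nat \<Rightarrow> bool) \<Rightarrow> (nat \<Rightarrow> bool) \<Rightarrow> bool pmf"
    by (rule bind_commute_pmf)
  show ?thesis
    unfolding relay_success_def Let_def by (simp only: swap_RD swap_C swap_SD)
qed

lemma pmf_relay_success_eq_expectation:
  "pmf (relay_success TYPE('a::{finite,field}) K NS NR eSD eSR eRD) True =
    measure_pmf.expectation (Pi_pmf {..<NS} False (\<lambda>_. bernoulli_pmf eSR)) (\<lambda>erSR.
    measure_pmf.expectation (Pi_pmf {..<NS} False (\<lambda>_. bernoulli_pmf eSD)) (\<lambda>erSD.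
    measure_pmf.expectation (Pi_pmf {..<NR} False (\<lambda>_. bernoulli_pmf eRD)) (\<lambda>erRD.
      decode_prob CARD('a) K (card (received NS erSD)) (card (received NS erSR - received NS erSD))
        (card (received NR erRD)))))"
proof -
  interpret fin_vec_space "TYPE('a)" K .
  have "pmf (bind_pmf (pmf_of_set (carrier_mat NS K :: 'a mat set)) (\<lambda>C.
      bind_pmf (pmf_of_set (carrier_mat NR (length (filter (\<lambda>j. \<not> erSR j) [0..<NS])))) (\<lambda>G.
        return_pmf (row_rank K (mat_of_rows K (sel_rows K C (filter (\<lambda>j. \<not> erSD j) [0..<NS])
          @ sel_rows K (G * mat_of_rows K (sel_rows K C (filter (\<lambda>j. \<not> erSR j) [0..<NS])))
                       (filter (\<lambda>i. \<not> erRD i) [0..<NR]))) = K)))) True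
    = decode_prob CARD('a) K (card (received NS erSD)) (card (received NS erSR - received NS erSD))
        (card (received NR erRD))" for erSR erSD erRD
    by (subst prob_rank_received) (auto simp: received_def)
  then show ?thesis
    unfolding relay_success_erasures_first pmf_bind[of "Pi_pmf {..<NS} False _"]
      pmf_bind[of "Pi_pmf {..<NR} False _"] by presburger
qed

lemma Bin_mult_Bin_eq_alpha:
  assumes "r \<le> m" "m \<le> NS" "r \<le> k" "k - r \<le> NS - m"
  shows "Bin m NS eSR * (Bin r m eSD * Bin (k - r) (NS - m) eSD) = alpha NS eSR eSD m k r"
proof -
  have "real (NS choose r) * real ((NS - r) choose (m - r)) = real (NS choose m) * real (m choose r)"
    using choose_mult[of r m NS] assms by (simp flip: of_nat_mult)
  moreover have "(1 - eSD) ^ k = (1 - eSD) ^ r * (1 - eSD) ^ (k - r)"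
    using assms by (simp flip: power_add)
  moreover have "eSD ^ (NS - k) = eSD ^ (m - r) * eSD ^ (NS - m - (k - r))"
    using assms by (simp flip: power_add)
  ultimately show ?thesis unfolding alpha_def Bin_def by (simp add: mult_ac)
qed

text \<open>Here \<open>m\<close>, \<open>k\<close> and \<open>r\<close> count the source packets received by R, by D and by both, and
  \<open>F k e\<close> is the decoding probability given \<open>k\<close> direct and \<open>e\<close> relayed source packets; it
  vanishes when fewer than \<open>K\<close> source packets got through.\<close>

lemma sum_erasure_counts_eq:
  fixes F :: "nat \<Rightarrow> nat \<Rightarrow> real"
  assumes F0: "\<And>k e. e + k < K \<Longrightarrow> F k e = 0"
  shows "(\<Sum>m\<le>NS. Bin m NS eSR * (\<Sum>(k, r)\<in>{(k, r). r \<le> k \<and> k \<le> NS \<and> r \<le> m \<and> k - r \<le> NS - m}.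
            F k (m - r) * (Bin r m eSD * Bin (k - r) (NS - m) eSD)))
    = (\<Sum>(m, mD, mRD) \<in> {(m, mD, mRD). K \<le> m + mD \<and> m \<le> NS \<and> mD \<le> NS
                          \<and> m + mD - NS \<le> mRD \<and> mRD \<le> min m mD}.
       alpha NS eSR eSD m mD mRD * F mD (m - mRD))"
proof -
  let ?J = "\<lambda>m. {(k, r). r \<le> k \<and> k \<le> NS \<and> r \<le> m \<and> k - r \<le> NS - m}"
  let ?T = "{(m, mD, mRD). K \<le> m + mD \<and> m \<le> NS \<and> mD \<le> NS \<and> m + mD - NS \<le> mRD \<and> mRD \<le> min m mD}"
  have finJ: "finite (?J m)" for m
    by (rule finite_subset[of _ "{..NS} \<times> {..NS}"]) auto
  have "(\<Sum>m\<le>NS. Bin m NS eSR * (\<Sum>(k, r)\<in>?J m. F k (m - r) * (Bin r m eSD * Bin (k - r) (NS - m) eSD)))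
      = (\<Sum>m\<le>NS. \<Sum>(k, r)\<in>?J m. Bin m NS eSR * (F k (m - r) * (Bin r m eSD * Bin (k - r) (NS - m) eSD)))"
    by (simp add: sum_distrib_left case_prod_unfold)
  also have "\<dots> = (\<Sum>(m, k, r)\<in>Sigma {..NS} ?J. Bin m NS eSR * (F k (m - r) * (Bin r m eSD * Bin (k - r) (NS - m) eSD)))"
    by (rule sum.Sigma) (auto simp: finJ)
  also have "\<dots> = (\<Sum>(m, mD, mRD) \<in> ?T. alpha NS eSR eSD m mD mRD * F mD (m - mRD))"
  proof (rule sum.mono_neutral_cong_right)
    show "finite (Sigma {..NS} ?J)" using finJ by auto
    show "?T \<subseteq> Sigma {..NS} ?J" by auto
    show "\<forall>t\<in>Sigma {..NS} ?J - ?T.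
        (\<lambda>(m, k, r). Bin m NS eSR * (F k (m - r) * (Bin r m eSD * Bin (k - r) (NS - m) eSD))) t = 0"
    proof
      fix t assume t: "t \<in> Sigma {..NS} ?J - ?T"
      obtain m k r where mkr: "t = (m, k, r)" by (cases t) auto
      then have "m - r + k < K" using t by auto
      then show "(\<lambda>(m, k, r). Bin m NS eSR * (F k (m - r) * (Bin r m eSD * Bin (k - r) (NS - m) eSD))) t = 0"
        using F0 mkr by simp
    qed
    show "(\<lambda>(m, k, r). Bin m NS eSR * (F k (m - r) * (Bin r m eSD * Bin (k - r) (NS - m) eSD))) t
        = (\<lambda>(m, mD, mRD). alpha NS eSR eSD m mD mRD * F mD (m - mRD)) t" if "t \<in> ?T" for t
    proof -
      obtain m k r where mkr: "t = (m, k, r)" by (cases t) auto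
      then have "r \<le> m" "m \<le> NS" "r \<le> k" "k - r \<le> NS - m" using that by auto
      from Bin_mult_Bin_eq_alpha[OF this] show ?thesis unfolding mkr by (simp add: mult_ac)
    qed
  qed
  finally show ?thesis .
qed

theorem mainTheorem4:
  fixes K NS NR :: nat and eSD eSR eRD :: real
  assumes "K \<ge> 1" and "NS \<ge> K" and "NR \<ge> 1"
    and "0 \<le> eSD" "eSD \<le> 1" and "0 \<le> eSR" "eSR \<le> 1" and "0 \<le> eRD" "eRD \<le> 1"
  shows "pmf (relay_success TYPE('a::{finite,field}) K NS NR eSD eSR eRD) True =
    (\<Sum>(m, mD, mRD) \<in> {(m, mD, mRD). K \<le> m + mD \<and> m \<le> NS \<and> mD \<le> NS
                          \<and> m + mD - NS \<le> mRD \<and> mRD \<le> min m mD}.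
       alpha NS eSR eSD m mD mRD *
       (\<Sum>m' \<in> {K - mD..NR}.
          Bin m' NR eRD * P2 CARD('a) (m' + mD) (m - mRD + mD) mD K))"
proof -
  define F where "F k e = (\<Sum>m\<le>NR. Bin m NR eRD * decode_prob CARD('a) K k e m)" for k e
  define H where "H m = (\<Sum>(k, r)\<in>{(k, r). r \<le> k \<and> k \<le> NS \<and> r \<le> m \<and> k - r \<le> NS - m}.
                          F k (m - r) * (Bin r m eSD * Bin (k - r) (NS - m) eSD))" for m
  have "pmf (relay_success TYPE('a) K NS NR eSD eSR eRD) True
      = measure_pmf.expectation (Pi_pmf {..<NS} False (\<lambda>_. bernoulli_pmf eSR)) (\<lambda>erSR. H (card (received NS erSR)))"
    unfolding pmf_relay_success_eq_expectation H_def F_def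
    by (simp only: expectation_received_counts[OF assms(4,5,8,9) received_subset, where h = "decode_prob CARD('a) K"])
  also have "\<dots> = (\<Sum>m\<le>NS. Bin m NS eSR * H m)"
    by (rule expectation_card_received[OF assms(6,7)])
  also have "\<dots> = (\<Sum>(m, mD, mRD) \<in> {(m, mD, mRD). K \<le> m + mD \<and> m \<le> NS \<and> mD \<le> NS
                          \<and> m + mD - NS \<le> mRD \<and> mRD \<le> min m mD}. alpha NS eSR eSD m mD mRD * F mD (m - mRD))"
    unfolding H_def by (rule sum_erasure_counts_eq) (simp add: F_def decode_prob_eq_0)
  also have "\<dots> = (\<Sum>(m, mD, mRD) \<in> {(m, mD, mRD). K \<le> m + mD \<and> m \<le> NS \<and> mD \<le> NS
                          \<and> m + mD - NS \<le> mRD \<and> mRD \<le> min m mD}.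
       alpha NS eSR eSD m mD mRD * (\<Sum>m' \<in> {K - mD..NR}. Bin m' NR eRD * P2 CARD('a) (m' + mD) (m - mRD + mD) mD K))"
    by (simp only: F_def sum_Bin_decode_prob_eq_P2)
  finally show ?thesis .
qed

end
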